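(* Suppose: (1) $F:\mathbb{R}^d\to\mathbb{R}$ is convex, differentiable and $L$-smooth, with a minimizer $x^\star$; (2) $\zeta_i$ is a random variable depending only on $X_0,\ldots,X_i$ with $\mathbb{E}[\zeta_i\mid X_0,\ldots,X_i]=0$, and $\|\zeta_i\|\le S$ whenever $\|X_j-x^\star\|\le r$ for all $j\le i$. Let $X_0$ satisfy $\|X_0-x^\star\|\le r$ and define recursively $X_{i+1}=X_i-\eta g_i+\sqrt{\eta}\,\xi_i$, where $g_i=\nabla F(X_i)+\zeta_i$ and $\xi_i\sim N(0,I_d)$. Let $G=\{\|X_j-x^\star\|\le r\ \forall\,1\le j\le i_{\max}\}$. Then whenever $r^2>\|X_0-x^\star\|^2+i_{\max}[2\eta^2(S^2+L^2r^2)+\eta d]$ and $C_\xi\ge\sqrt{2d}$, $$\mathbb{P}(G^c)\le i_{\max}\Bigg[\exp\Bigg(-\frac{\big(r^2-\|X_0-x^\star\|^2-i_{\max}[2\eta^2(S^2+L^2r^2)+\eta d]\big)^2}{2i_{\max}\big(2\eta Sr+2\sqrt{\eta}C_\xi(r+\eta S+\eta Lr)+\eta C_\xi^2\big)^2}\Bigg)+\exp\Big(-\frac{C_\xi^2-d}{8}\Big)\Bigg].$$ *)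

theory Defs
  imports "HOL-Probability.Probability"
begin

definition gen_sigma :: "'a measure \<Rightarrow> ('a \<Rightarrow> 'b::topological_space) set \<Rightarrow> 'a measure" where
  "gen_sigma M Ys = sigma (space M) (\<Union>Y\<in>Ys. {Y -` A \<inter> space M | A. A \<in> sets borel})"

definition std_gaussian_vec :: "'a measure \<Rightarrow> ('a \<Rightarrow> real^'d) \<Rightarrow> bool" where
  "std_gaussian_vec M Y \<longleftrightarrow>
     distributed M lborel Y
       (\<lambda>x. ennreal ((2 * pi) powr (- real CARD('d) / 2) * exp (- (norm x)\<^sup>2 / 2)))"

end

theory Submission
  imports Defs
begin

(* Let V_i = |X_(i+1) - xs|^2 - |X_i - xs|^2 - D with D = 2 eta^2 (S^2 + L^2 r^2) + eta d, and
   freeze V_i at 0 once the iterate has left the ball of radius r around xs.  If the iterate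
   leaves the ball for the first time at step k <= imax, the frozen partial sum up to k
   telescopes and exceeds delta = r^2 - |x0 - xs|^2 - imax D.

   The hypothesis on r forces eta L <= 1, so the gradient step x - eta gradF x does not increase
   the distance to the minimizer.  Integrating out the Gaussian xi_i exactly (a noncentral
   chi-square moment generating function) and then zeta_i by Hoeffding's lemma (conditional
   mean zero, |<u, zeta_i>| <= r S inside the ball) gives
   E [exp (lam V_i) | X_0, ..., X_i] <= exp (lam^2 c^2 / 2), where c is the constant in the
   denominator of the bound.  Hence E exp (lam (V_0 + ... + V_(k-1))) <= exp (k lam^2 c^2 / 2),
   and Chernoff's inequality with lam = delta / (imax c^2) together with a union bound over k
   gives imax exp (- delta^2 / (2 imax c^2)). *)

section \<open>Elementary real inequalities\<close>

lemma cosh_le_exp_half_sq: "cosh (y::real) \<le> exp (y\<^sup>2 / 2)"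
proof -
  have nonneg: "cosh y \<le> exp (y\<^sup>2 / 2)" if "y \<ge> 0" for y :: real
  proof -
    have hoeffding: "-(2*y) * (1/2) + ln (1 + (1/2) * (exp (2*y) - 1)) \<le> (2*y)\<^sup>2 / 8"
      using Hoeffdings_lemma_aux[of "2*y" "1/2"] that by simp
    have pos: "1 + (1/2) * (exp (2*y) - 1) > 0" by (simp add: algebra_simps add_pos_pos)
    have "exp (-y) * exp (2*y) = exp y" by (simp add: mult_exp_exp)
    then have "cosh y = exp (-y) * (1 + (1/2) * (exp (2*y) - 1))"
      unfolding cosh_def by (simp add: algebra_simps)
    also have "\<dots> = exp (-y + ln (1 + (1/2) * (exp (2*y) - 1)))"
      by (subst exp_add, subst exp_ln[OF pos], rule refl)
    also have "\<dots> \<le> exp (y\<^sup>2 / 2)" using hoeffding by (simp add: power2_eq_square)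
    finally show ?thesis .
  qed
  show ?thesis
    using nonneg[of y] nonneg[of "-y"] by (cases "y \<ge> 0") auto
qed

lemma exp_mult_le_cosh_add_chord:
  fixes t y B :: real
  assumes "\<bar>y\<bar> \<le> B"
  shows "exp (t * y) \<le> cosh (t * B) + y * (sinh (t * B) / B)"
proof (cases "B = 0")
  case True
  then show ?thesis using assms by simp
next
  case False
  then have B: "B > 0" using assms by linarith
  define \<theta> where "\<theta> = (y + B) / (2 * B)"
  have \<theta>: "0 \<le> \<theta>" "\<theta> \<le> 1" using assms B by (auto simp: \<theta>_def field_simps)
  have "t * y = (1 - \<theta>) * (-(t * B)) + \<theta> * (t * B)"
    using B by (simp add: \<theta>_def field_simps)
  then have "exp (t * y) = exp (1 * ((1 - \<theta>) *\<^sub>R (-(t * B)) + \<theta> *\<^sub>R (t * B)))" by simp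
  also have "\<dots> \<le> (1 - \<theta>) * exp (1 * (-(t * B))) + \<theta> * exp (1 * (t * B))"
    using convex_onD[OF convex_on_exp[of 1], of \<theta> "-(t * B)" "t * B"] \<theta> by simp
  also have "\<dots> = cosh (t * B) + y * (sinh (t * B) / B)"
    using B by (simp add: \<theta>_def cosh_def sinh_def field_simps)
  finally show ?thesis .
qed

lemma one_minus_powr_neg_le_exp:
  fixes x d :: real
  assumes "0 \<le> x" "x \<le> 1/4" "0 \<le> d"
  shows "(1 - 2 * x) powr (- d / 2) \<le> exp (d * x + 4 * d * x\<^sup>2)"
proof -
  have ln_bound: "-(2 * x) - 2 * (2 * x)\<^sup>2 \<le> ln (1 - 2 * x)"
    using ln_one_minus_pos_lower_bound[of "2 * x"] assms by simp
  have "(1 - 2 * x) powr (- d / 2) = exp (- d / 2 * ln (1 - 2 * x))"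
    using assms by (simp add: powr_def)
  also have "\<dots> \<le> exp (- d / 2 * (-(2 * x) - 2 * (2 * x)\<^sup>2))"
    using mult_left_mono[OF ln_bound, of "d / 2"] assms by simp
  also have "\<dots> = exp (d * x + 4 * d * x\<^sup>2)"
    by (simp add: power2_eq_square algebra_simps)
  finally show ?thesis .
qed

lemma sq_le_quadratic_mult_sq:
  fixes p C :: real
  assumes p: "p \<ge> 0" and C: "C \<ge> 0" "C\<^sup>2 \<ge> 2"
  shows "(16/9) * p\<^sup>2 \<le> (C\<^sup>2 + 2 * p * C - 4/3) * (p + C)\<^sup>2"
proof (cases "p \<le> C")
  case True
  have "(2 * p)\<^sup>2 \<le> (p + C)\<^sup>2" using True p by (intro power_mono) auto
  moreover have "C\<^sup>2 + 2 * p * C - 4/3 \<ge> 2/3" using C mult_nonneg_nonneg[OF p C(1)] by linarith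
  ultimately have "(2/3) * (2 * p)\<^sup>2 \<le> (C\<^sup>2 + 2 * p * C - 4/3) * (p + C)\<^sup>2"
    by (intro mult_mono) auto
  moreover have "(2/3) * (2 * p)\<^sup>2 = (8/3) * p\<^sup>2" by (simp add: power_mult_distrib)
  ultimately show ?thesis using zero_le_power2[of p] by linarith
next
  case False
  have "p * C \<ge> C * C" using False C by (simp add: mult_right_mono)
  then have "C\<^sup>2 + 2 * p * C - 4/3 \<ge> 16/9" using C by (simp add: power2_eq_square)
  moreover have "p\<^sup>2 \<le> (p + C)\<^sup>2" using p C by (simp add: power_mono)
  ultimately show ?thesis by (intro mult_mono) auto
qed

lemma inverse_add_sq_div_le_sq:
  fixes x p C :: real
  assumes x: "0 \<le> x" and p: "0 \<le> p" and C: "0 \<le> C" "2 \<le> C\<^sup>2"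
    and small: "4 * x * (p + C)\<^sup>2 \<le> 1"
  shows "1 / (1 - 2 * x) + p\<^sup>2 / (1 - 2 * x)\<^sup>2 \<le> (p + C)\<^sup>2"
proof -
  define \<beta> where "\<beta> = 1 - 2 * x"
  have pC: "(p + C)\<^sup>2 \<ge> 2"
    using power_mono[of C "p + C" 2] p C by linarith
  then have "x \<le> 1/8" using small x mult_left_mono[OF pC, of "4 * x"] by linarith
  then have \<beta>: "\<beta> \<ge> 3/4" by (simp add: \<beta>_def)
  have inv\<beta>: "1 / \<beta> \<le> 4/3" using \<beta> by (simp add: field_simps)
  have "\<beta>\<^sup>2 \<le> 1" using \<beta> x by (intro power_le_one) (auto simp: \<beta>_def)
  have "p\<^sup>2 / \<beta>\<^sup>2 - p\<^sup>2 = p\<^sup>2 * (1 - \<beta>\<^sup>2) * (1 / \<beta>)\<^sup>2"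
    using \<beta> by (simp add: field_simps power2_eq_square)
  also have "\<dots> \<le> p\<^sup>2 * (4 * x) * (4/3)\<^sup>2"
  proof (intro mult_mono power_mono mult_left_mono)
    show "1 - \<beta>\<^sup>2 \<le> 4 * x" using x by (simp add: \<beta>_def power2_eq_square algebra_simps)
  qed (use x p \<beta> inv\<beta> \<open>\<beta>\<^sup>2 \<le> 1\<close> in auto)
  also have "\<dots> = (16/9) * p\<^sup>2 * (4 * x)" by (simp add: power2_eq_square)
  finally have "p\<^sup>2 / \<beta>\<^sup>2 \<le> p\<^sup>2 + (16/9) * p\<^sup>2 * (4 * x)" by linarith
  moreover have "(16/9) * p\<^sup>2 * (4 * x) \<le> C\<^sup>2 + 2 * p * C - 4/3"
  proof (rule mult_right_le_imp_le)
    have "(16/9) * p\<^sup>2 * (4 * x) * (p + C)\<^sup>2 \<le> (16/9) * p\<^sup>2"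
      using mult_left_mono[OF small, of "(16/9) * p\<^sup>2"] by (simp add: mult.assoc)
    also have "\<dots> \<le> (C\<^sup>2 + 2 * p * C - 4/3) * (p + C)\<^sup>2"
      by (rule sq_le_quadratic_mult_sq[OF p C])
    finally show "(16/9) * p\<^sup>2 * (4 * x) * (p + C)\<^sup>2 \<le> (C\<^sup>2 + 2 * p * C - 4/3) * (p + C)\<^sup>2" .
  qed (use pC in linarith)
  ultimately show ?thesis
    using inv\<beta> unfolding \<beta>_def[symmetric] by (simp add: power2_eq_square algebra_simps)
qed

lemma sq_noise_const_lower_bound:
  fixes \<eta> r S d C x c :: real
  assumes \<eta>: "\<eta> > 0" and r: "r > 0" and S: "S \<ge> 0" and d: "d \<ge> 1"
    and C: "C \<ge> 0" "C\<^sup>2 \<ge> 2 * d" and \<eta>d: "\<eta> * d \<le> r\<^sup>2"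
    and x: "x \<ge> 0" "4 * x * (sqrt \<eta> * S + C)\<^sup>2 \<le> 1"
    and c: "c \<ge> 2 * sqrt \<eta> * r * (sqrt \<eta> * S + C) + \<eta> * C\<^sup>2"
  shows "8 * d * \<eta>\<^sup>2 + 4 * \<eta> * r\<^sup>2 / (1 - 2 * x) + 4 * \<eta> * r\<^sup>2 * (sqrt \<eta> * S)\<^sup>2 / (1 - 2 * x)\<^sup>2 \<le> c\<^sup>2"
proof -
  define hq where "hq = sqrt \<eta>"
  define p where "p = hq * S"
  have hq: "hq > 0" "hq * hq = \<eta>" using \<eta> by (auto simp: hq_def)
  have p: "p \<ge> 0" using hq S by (simp add: p_def)
  have C1: "C \<ge> 1"
  proof (rule ccontr)
    assume "\<not> C \<ge> 1"
    then have "C * C \<le> 1 * 1" using C by (intro mult_mono) auto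
    then show False using C d by (simp add: power2_eq_square)
  qed
  have "8 * d * \<eta>\<^sup>2 \<le> 4 * hq * r * C * \<eta> * C\<^sup>2 + (\<eta> * C\<^sup>2)\<^sup>2"
  proof -
    have "r \<ge> hq"
    proof -
      have "\<eta> \<le> \<eta> * d" using mult_left_mono[OF d, of \<eta>] \<eta> by simp
      then have "hq\<^sup>2 \<le> r\<^sup>2" using \<eta>d hq by (simp add: power2_eq_square)
      then show ?thesis using r hq by (simp add: power2_le_iff_abs_le abs_le_iff)
    qed
    moreover have "C * C\<^sup>2 \<ge> d"
      using mult_mono[OF C1 C(2)] C d by linarith
    ultimately have "(hq * r) * (C * C\<^sup>2) \<ge> (hq * hq) * d"
      using hq d by (intro mult_mono) auto
    then have "4 * hq * r * C * \<eta> * C\<^sup>2 \<ge> 4 * d * \<eta>\<^sup>2"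
      using mult_left_mono[of _ _ "4 * \<eta>"] \<eta> hq by (simp add: power2_eq_square algebra_simps)
    moreover have "(\<eta> * C\<^sup>2)\<^sup>2 \<ge> (\<eta> * (2 * d))\<^sup>2"
      using C \<eta> d by (intro power_mono mult_left_mono) auto
    moreover have "(\<eta> * (2 * d))\<^sup>2 \<ge> 4 * d * \<eta>\<^sup>2"
      using d \<eta> by (simp add: power2_eq_square algebra_simps mult_right_mono)
    ultimately show ?thesis by linarith
  qed
  moreover have "4 * \<eta> * r\<^sup>2 / (1 - 2 * x) + 4 * \<eta> * r\<^sup>2 * p\<^sup>2 / (1 - 2 * x)\<^sup>2 \<le> 4 * \<eta> * r\<^sup>2 * (p + C)\<^sup>2"
    using mult_left_mono[OF inverse_add_sq_div_le_sq[OF x(1) p C(1) _ x(2)[folded hq_def, folded p_def]],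
        of "4 * \<eta> * r\<^sup>2"] C d \<eta>
    by (simp add: algebra_simps)
  moreover have "(2 * hq * r * (p + C) + \<eta> * C\<^sup>2)\<^sup>2 \<ge> 4 * \<eta> * r\<^sup>2 * (p + C)\<^sup>2 + 4 * hq * r * C * \<eta> * C\<^sup>2 + (\<eta> * C\<^sup>2)\<^sup>2"
  proof -
    have "(2 * hq * r * (p + C) + \<eta> * C\<^sup>2)\<^sup>2 = 4 * \<eta> * r\<^sup>2 * (p + C)\<^sup>2 + 4 * hq * r * (p + C) * \<eta> * C\<^sup>2 + (\<eta> * C\<^sup>2)\<^sup>2"
      unfolding hq(2)[symmetric] by (simp add: power2_eq_square algebra_simps)
    moreover have "4 * hq * r * (p + C) * \<eta> * C\<^sup>2 \<ge> 4 * hq * r * C * \<eta> * C\<^sup>2"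
      using hq r p \<eta> by (simp add: mult_left_mono mult_right_mono)
    ultimately show ?thesis by simp
  qed
  moreover have "c\<^sup>2 \<ge> (2 * hq * r * (p + C) + \<eta> * C\<^sup>2)\<^sup>2"
    using c hq r p C \<eta> unfolding hq_def p_def by (intro power_mono) auto
  ultimately show ?thesis unfolding hq_def p_def by linarith
qed

lemma noise_const_param_bounds:
  fixes \<eta> r S L C lam :: real
  defines "c \<equiv> 2 * \<eta> * S * r + 2 * sqrt \<eta> * C * (r + \<eta> * S + \<eta> * L * r) + \<eta> * C\<^sup>2"
  assumes \<eta>: "\<eta> > 0" and r: "r > 0" and S: "S \<ge> 0" and L: "L \<ge> 0" and C: "C \<ge> 0"
    and lam: "lam \<ge> 0" "lam * c\<^sup>2 \<le> r\<^sup>2"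
  shows "2 * sqrt \<eta> * r * (sqrt \<eta> * S + C) + \<eta> * C\<^sup>2 \<le> c"
    and "4 * (lam * \<eta>) * (sqrt \<eta> * S + C)\<^sup>2 \<le> 1"
proof -
  define p where "p = sqrt \<eta> * S"
  have p: "p \<ge> 0" using S \<eta> by (simp add: p_def)
  have "(2 * sqrt \<eta> * C) * r \<le> (2 * sqrt \<eta> * C) * (r + \<eta> * S + \<eta> * L * r)"
    using \<eta> S L r C by (intro mult_left_mono) auto
  moreover have "2 * \<eta> * S * r = 2 * sqrt \<eta> * r * p"
    using \<eta> by (simp add: p_def power2_eq_square flip: mult.assoc)
  moreover have "2 * sqrt \<eta> * r * (p + C) = 2 * sqrt \<eta> * r * p + (2 * sqrt \<eta> * C) * r"
    by (simp add: algebra_simps)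
  ultimately have c_lb: "2 * sqrt \<eta> * r * (p + C) + \<eta> * C\<^sup>2 \<le> c" unfolding c_def by linarith
  then show "2 * sqrt \<eta> * r * (sqrt \<eta> * S + C) + \<eta> * C\<^sup>2 \<le> c" by (simp add: p_def)
  have "0 \<le> \<eta> * C\<^sup>2" using \<eta> by simp
  then have "2 * sqrt \<eta> * r * (p + C) \<le> c" using c_lb by linarith
  then have "(2 * sqrt \<eta> * r * (p + C))\<^sup>2 \<le> c\<^sup>2"
    using \<eta> r p C by (intro power_mono) auto
  then have "lam * (2 * sqrt \<eta> * r * (p + C))\<^sup>2 \<le> r\<^sup>2"
    using lam mult_left_mono by (blast intro: order_trans)
  moreover have "lam * (2 * sqrt \<eta> * r * (p + C))\<^sup>2 = (4 * (lam * \<eta>) * (p + C)\<^sup>2) * r\<^sup>2"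
    using \<eta> by (simp add: power_mult_distrib)
  ultimately have "(4 * (lam * \<eta>) * (p + C)\<^sup>2) * r\<^sup>2 \<le> r\<^sup>2" by simp
  then show "4 * (lam * \<eta>) * (sqrt \<eta> * S + C)\<^sup>2 \<le> 1" using r by (simp add: p_def)
qed

lemma increment_mgf_real_bound:
  fixes \<eta> r S L C d lam u2 e2 :: real
  defines "c \<equiv> 2 * \<eta> * S * r + 2 * sqrt \<eta> * C * (r + \<eta> * S + \<eta> * L * r) + \<eta> * C\<^sup>2"
  assumes \<eta>: "\<eta> > 0" and r: "r > 0" and S: "S \<ge> 0" and L: "L \<ge> 0" and d: "d \<ge> 1"
    and C: "C \<ge> 0" "C\<^sup>2 \<ge> 2 * d" and \<eta>d: "\<eta> * d \<le> r\<^sup>2"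
    and u2: "0 \<le> u2" "u2 \<le> e2" "e2 \<le> r\<^sup>2"
    and lam: "lam \<ge> 0" "lam * c\<^sup>2 \<le> r\<^sup>2"
  shows "(1 - 2 * lam * \<eta>) powr (- d / 2)
           * exp (lam * (u2 + \<eta>\<^sup>2 * S\<^sup>2) / (1 - 2 * lam * \<eta>)
                  - lam * (e2 + (2 * \<eta>\<^sup>2 * (S\<^sup>2 + L\<^sup>2 * r\<^sup>2) + \<eta> * d)))
           * cosh (2 * lam * \<eta> * r * S / (1 - 2 * lam * \<eta>))
         \<le> exp (lam\<^sup>2 * c\<^sup>2 / 2)"
proof -
  define x where "x = lam * \<eta>"
  define \<beta> where "\<beta> = 1 - 2 * x"
  define p where "p = sqrt \<eta> * S"
  define y where "y = 2 * x * r * S / \<beta>"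
  have x: "x \<ge> 0" using lam \<eta> by (simp add: x_def)
  have p: "p \<ge> 0" using S \<eta> by (simp add: p_def)
  have c_lb: "c \<ge> 2 * sqrt \<eta> * r * (p + C) + \<eta> * C\<^sup>2"
    and small: "4 * x * (p + C)\<^sup>2 \<le> 1"
    using noise_const_param_bounds[OF \<eta> r S L C(1) lam(1) lam(2)[unfolded c_def]]
    by (simp_all add: c_def p_def x_def)
  have "C\<^sup>2 \<le> (p + C)\<^sup>2" using p C by (intro power_mono) auto
  then have "x \<le> 1/8" using mult_left_mono[of 2 "(p + C)\<^sup>2" "4 * x"] small x C d by linarith
  then have \<beta>: "\<beta> \<ge> 3/4" by (simp add: \<beta>_def)
  have powr_bound: "\<beta> powr (- d / 2) \<le> exp (d * x + 4 * d * x\<^sup>2)"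
    unfolding \<beta>_def using \<open>x \<le> 1/8\<close> x d by (intro one_minus_powr_neg_le_exp) auto
  have exponent_bound:
    "lam * (u2 + \<eta>\<^sup>2 * S\<^sup>2) / \<beta> - lam * (e2 + (2 * \<eta>\<^sup>2 * (S\<^sup>2 + L\<^sup>2 * r\<^sup>2) + \<eta> * d))
       \<le> 2 * lam * x * r\<^sup>2 / \<beta> - d * x"
  proof -
    have "lam * u2 / \<beta> - lam * e2 \<le> lam * e2 / \<beta> - lam * e2"
      using u2 lam \<beta> by (simp add: divide_right_mono mult_left_mono)
    also have "\<dots> = lam * e2 * (2 * x) / \<beta>" using \<beta> by (simp add: field_simps \<beta>_def)
    also have "\<dots> \<le> lam * r\<^sup>2 * (2 * x) / \<beta>"
      using u2 lam x \<beta> by (intro divide_right_mono mult_right_mono mult_left_mono) auto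
    finally have e2_part: "lam * u2 / \<beta> - lam * e2 \<le> 2 * lam * x * r\<^sup>2 / \<beta>"
      by (simp add: mult_ac)
    have "lam * (\<eta>\<^sup>2 * S\<^sup>2) * (1 / \<beta>) \<le> lam * (\<eta>\<^sup>2 * S\<^sup>2) * 2"
      using \<beta> lam by (intro mult_left_mono) (auto simp: field_simps)
    moreover have "lam * (2 * \<eta>\<^sup>2 * (S\<^sup>2 + L\<^sup>2 * r\<^sup>2) + \<eta> * d) \<ge> 2 * lam * \<eta>\<^sup>2 * S\<^sup>2 + d * x"
      using lam \<eta> by (simp add: x_def algebra_simps)
    ultimately show ?thesis
      using e2_part by (simp add: add_divide_distrib distrib_left algebra_simps)
  qed
  have "y\<^sup>2 / 2 = 2 * lam\<^sup>2 * \<eta> * r\<^sup>2 * p\<^sup>2 / \<beta>\<^sup>2"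
    using \<eta> by (simp add: y_def x_def p_def power2_eq_square field_simps)
  then have "d * x + 4 * d * x\<^sup>2 + (2 * lam * x * r\<^sup>2 / \<beta> - d * x) + y\<^sup>2 / 2
      = lam\<^sup>2 / 2 * (8 * d * \<eta>\<^sup>2 + 4 * \<eta> * r\<^sup>2 / \<beta> + 4 * \<eta> * r\<^sup>2 * p\<^sup>2 / \<beta>\<^sup>2)"
    by (simp add: x_def power2_eq_square field_simps)
  also have "\<dots> \<le> lam\<^sup>2 / 2 * c\<^sup>2"
    using sq_noise_const_lower_bound[OF \<eta> r S d C \<eta>d x small[unfolded p_def] c_lb[unfolded p_def]]
    by (intro mult_left_mono) (auto simp: \<beta>_def p_def)
  finally have total_exponent:
    "d * x + 4 * d * x\<^sup>2 + (2 * lam * x * r\<^sup>2 / \<beta> - d * x) + y\<^sup>2 / 2 \<le> lam\<^sup>2 * c\<^sup>2 / 2" by simp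
  have "1 - 2 * lam * \<eta> = \<beta>" "2 * lam * \<eta> * r * S / (1 - 2 * lam * \<eta>) = y"
    by (simp_all add: \<beta>_def y_def x_def mult.assoc)
  then have "(1 - 2 * lam * \<eta>) powr (- d / 2)
           * exp (lam * (u2 + \<eta>\<^sup>2 * S\<^sup>2) / (1 - 2 * lam * \<eta>)
                  - lam * (e2 + (2 * \<eta>\<^sup>2 * (S\<^sup>2 + L\<^sup>2 * r\<^sup>2) + \<eta> * d)))
           * cosh (2 * lam * \<eta> * r * S / (1 - 2 * lam * \<eta>))
        \<le> exp (d * x + 4 * d * x\<^sup>2) * exp (2 * lam * x * r\<^sup>2 / \<beta> - d * x) * exp (y\<^sup>2 / 2)"
    using powr_bound exponent_bound cosh_le_exp_half_sq[of y]
    by (simp only:) (intro mult_mono, auto)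
  also have "\<dots> \<le> exp (lam\<^sup>2 * c\<^sup>2 / 2)"
    using total_exponent by (simp flip: exp_add)
  finally show ?thesis .
qed

section \<open>Smooth convex functions\<close>

lemma has_real_derivative_along_line:
  fixes F :: "'a::real_inner \<Rightarrow> real"
  assumes gradF: "\<And>x. (F has_derivative (\<lambda>h. gradF x \<bullet> h)) (at x)"
  shows "((\<lambda>t. F (x + t *\<^sub>R v)) has_real_derivative (gradF (x + t *\<^sub>R v) \<bullet> v)) (at t)"
proof -
  have "((\<lambda>t. x + t *\<^sub>R v) has_derivative (\<lambda>h. h *\<^sub>R v)) (at t)"
    by (auto intro!: derivative_eq_intros)
  then have "((\<lambda>t. F (x + t *\<^sub>R v)) has_derivative (\<lambda>h. gradF (x + t *\<^sub>R v) \<bullet> (h *\<^sub>R v))) (at t)"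
    by (rule has_derivative_compose[OF _ gradF])
  then show ?thesis unfolding has_field_derivative_def
    by (rule has_derivative_eq_rhs) (auto simp: mult.commute)
qed

lemma convex_on_gradient_ineq:
  fixes F :: "'a::real_inner \<Rightarrow> real"
  assumes convF: "convex_on UNIV F"
    and gradF: "\<And>x. (F has_derivative (\<lambda>h. gradF x \<bullet> h)) (at x)"
  shows "F y - F x \<ge> gradF x \<bullet> (y - x)"
proof -
  define \<phi> where "\<phi> = (\<lambda>t::real. F (x + t *\<^sub>R (y - x)))"
  have "convex_on UNIV \<phi>"
  proof (rule convex_onI)
    fix t a b :: real assume t: "0 < t" "t < 1"
    have "x + ((1 - t) * a + t * b) *\<^sub>R (y - x)
        = (1 - t) *\<^sub>R (x + a *\<^sub>R (y - x)) + t *\<^sub>R (x + b *\<^sub>R (y - x))"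
      by (simp add: algebra_simps)
    then show "\<phi> ((1 - t) *\<^sub>R a + t *\<^sub>R b) \<le> (1 - t) * \<phi> a + t * \<phi> b"
      unfolding \<phi>_def using convex_onD[OF convF, of t] t by simp
  qed simp
  moreover have "(\<phi> has_field_derivative (gradF x \<bullet> (y - x))) (at 0 within UNIV)"
    unfolding \<phi>_def using has_real_derivative_along_line[OF gradF, of x "y - x" 0] by simp
  ultimately have "\<phi> 1 - \<phi> 0 \<ge> (gradF x \<bullet> (y - x)) * (1 - 0)"
    by (intro convex_on_imp_above_tangent) auto
  then show ?thesis by (simp add: \<phi>_def)
qed

lemma descent_lemma:
  fixes F :: "'a::real_inner \<Rightarrow> real"
  assumes gradF: "\<And>x. (F has_derivative (\<lambda>h. gradF x \<bullet> h)) (at x)"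
    and smooth: "\<And>x y. norm (gradF x - gradF y) \<le> L * norm (x - y)"
  shows "F (x + v) \<le> F x + gradF x \<bullet> v + L / 2 * (norm v)\<^sup>2"
proof -
  define \<psi> where "\<psi> = (\<lambda>t::real. F (x + t *\<^sub>R v) - t * (gradF x \<bullet> v) - L / 2 * t\<^sup>2 * (norm v)\<^sup>2)"
  have "\<psi> 1 \<le> \<psi> 0"
  proof (rule DERIV_nonpos_imp_nonincreasing[of 0 1 \<psi>])
    fix t :: real assume t: "0 \<le> t" "t \<le> 1"
    have D: "(\<psi> has_real_derivative
        (gradF (x + t *\<^sub>R v) \<bullet> v - gradF x \<bullet> v - L * t * (norm v)\<^sup>2)) (at t)"
      unfolding \<psi>_def
      by (rule derivative_eq_intros has_real_derivative_along_line[OF gradF] | simp)+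
    have "gradF (x + t *\<^sub>R v) \<bullet> v - gradF x \<bullet> v = (gradF (x + t *\<^sub>R v) - gradF x) \<bullet> v"
      by (simp add: inner_diff_left)
    also have "\<dots> \<le> norm (gradF (x + t *\<^sub>R v) - gradF x) * norm v" by (rule norm_cauchy_schwarz)
    also have "\<dots> \<le> (L * norm (t *\<^sub>R v)) * norm v"
      using smooth[of "x + t *\<^sub>R v" x] by (intro mult_right_mono) auto
    also have "\<dots> = L * t * (norm v)\<^sup>2" using t by (simp add: power2_eq_square)
    finally show "\<exists>y. (\<psi> has_real_derivative y) (at t) \<and> y \<le> 0" using D by force
  qed simp
  then show ?thesis by (simp add: \<psi>_def)
qed

lemma gradient_eq_0_at_minimizer:
  fixes F :: "'a::real_inner \<Rightarrow> real"
  assumes gradF: "\<And>x. (F has_derivative (\<lambda>h. gradF x \<bullet> h)) (at x)"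
    and minim: "\<And>x. F xs \<le> F x"
  shows "gradF xs = 0"
proof -
  have "(\<lambda>h. gradF xs \<bullet> h) = (\<lambda>v. 0)"
    by (rule differential_zero_maxmin[of xs UNIV F]) (use gradF minim in auto)
  then have "gradF xs \<bullet> gradF xs = 0" by metis
  then show ?thesis by simp
qed

text \<open>Comparing \<open>F xs\<close> with the descent lemma at \<open>x - (1 / L) *\<^sub>R gradF x\<close> gives
  \<open>gradF x \<bullet> (x - xs) \<ge> (norm (gradF x))\<^sup>2 / (2 * L)\<close>, which absorbs the quadratic term of the
  step as soon as \<open>\<eta> * L \<le> 1\<close>.\<close>

lemma gradient_step_dist_le:
  fixes F :: "'a::real_inner \<Rightarrow> real"
  assumes convF: "convex_on UNIV F"
    and gradF: "\<And>x. (F has_derivative (\<lambda>h. gradF x \<bullet> h)) (at x)"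
    and smooth: "\<And>x y. norm (gradF x - gradF y) \<le> L * norm (x - y)"
    and minim: "\<And>x. F xs \<le> F x"
    and \<eta>: "\<eta> > 0" and \<eta>L: "\<eta> * L \<le> 1"
  shows "norm (x - xs - \<eta> *\<^sub>R gradF x) \<le> norm (x - xs)"
proof (cases "L > 0")
  case False
  then have "L * norm (x - xs) \<le> 0" by (simp add: mult_nonpos_nonneg)
  then have "norm (gradF x - gradF xs) \<le> 0" using smooth[of x xs] by linarith
  then show ?thesis using gradient_eq_0_at_minimizer[OF gradF minim] by simp
next
  case True
  define g where "g = gradF x"
  define e where "e = x - xs"
  have "F (x + (- (1 / L)) *\<^sub>R g) \<le> F x + g \<bullet> ((- (1 / L)) *\<^sub>R g) + L / 2 * (norm ((- (1 / L)) *\<^sub>R g))\<^sup>2"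
    unfolding g_def by (rule descent_lemma[OF gradF smooth])
  also have "\<dots> = F x - (norm g)\<^sup>2 / (2 * L)"
    using True by (simp add: power2_eq_square field_simps power_mult_distrib flip: power2_norm_eq_inner)
  finally have "F (x + (- (1 / L)) *\<^sub>R g) \<le> F x - (norm g)\<^sup>2 / (2 * L)" .
  moreover have "F xs - F x \<ge> g \<bullet> (xs - x)"
    unfolding g_def by (rule convex_on_gradient_ineq[OF convF gradF])
  ultimately have co_coercive: "g \<bullet> e \<ge> (norm g)\<^sup>2 / (2 * L)"
    using minim[of "x + (- (1 / L)) *\<^sub>R g"] unfolding e_def by (simp add: inner_diff_right)
  have "(norm (e - \<eta> *\<^sub>R g))\<^sup>2 = (norm e)\<^sup>2 - 2 * \<eta> * (g \<bullet> e) + \<eta>\<^sup>2 * (norm g)\<^sup>2"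
    unfolding power2_norm_eq_inner
    by (simp add: inner_diff_left inner_diff_right inner_commute algebra_simps power2_eq_square)
  also have "\<dots> \<le> (norm e)\<^sup>2 - 2 * \<eta> * ((norm g)\<^sup>2 / (2 * L)) + \<eta>\<^sup>2 * (norm g)\<^sup>2"
    using mult_left_mono[OF co_coercive, of "2 * \<eta>"] \<eta> by linarith
  also have "\<dots> = (norm e)\<^sup>2 - \<eta> * (norm g)\<^sup>2 * (1 / L - \<eta>)"
    using True by (simp add: field_simps power2_eq_square)
  also have "\<dots> \<le> (norm e)\<^sup>2"
  proof -
    have "1 / L - \<eta> \<ge> 0" using \<eta>L True by (simp add: field_simps mult.commute)
    then show ?thesis using \<eta> by simp
  qed
  finally show ?thesis
    by (simp add: e_def g_def power2_le_iff_abs_le)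
qed

section \<open>The moment generating function of a squared shifted Gaussian\<close>

lemma nn_integral_lborel_affine:
  fixes f :: "'b::euclidean_space \<Rightarrow> ennreal"
  assumes c: "c \<noteq> 0" and f[measurable]: "f \<in> borel_measurable borel"
  shows "(\<integral>\<^sup>+x. f x \<partial>lborel) = (\<integral>\<^sup>+z. ennreal (\<bar>c\<bar> ^ DIM('b)) * f (t + c *\<^sub>R z) \<partial>lborel)"
  by (subst lborel_affine[OF c, of t]) (simp add: nn_integral_density nn_integral_distr)

lemma norm_sq_complete_square:
  fixes w y :: "'a::real_inner" and lam \<eta> :: real
  defines "\<beta> \<equiv> 1 - 2 * lam * \<eta>"
  assumes \<eta>: "\<eta> > 0" and \<beta>: "\<beta> > 0"
  shows "- (norm y)\<^sup>2 / 2 + lam * (norm (w + sqrt \<eta> *\<^sub>R y))\<^sup>2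
       = lam * (norm w)\<^sup>2 / \<beta> - \<beta> / 2 * (norm (y - (2 * lam * sqrt \<eta> / \<beta>) *\<^sub>R w))\<^sup>2"
proof -
  define a where "a = 2 * lam * sqrt \<eta> / \<beta>"
  define Q W I where "Q = (norm y)\<^sup>2" and "W = (norm w)\<^sup>2" and "I = w \<bullet> y"
  have e1: "(norm (w + sqrt \<eta> *\<^sub>R y))\<^sup>2 = W + 2 * sqrt \<eta> * I + \<eta> * Q"
    unfolding Q_def W_def I_def power2_norm_eq_inner using \<eta>
    by (simp add: inner_add_left inner_add_right inner_commute algebra_simps)
  have e2: "(norm (y - a *\<^sub>R w))\<^sup>2 = Q - 2 * a * I + a\<^sup>2 * W"
    unfolding Q_def W_def I_def power2_norm_eq_inner
    by (simp add: inner_diff_left inner_diff_right inner_commute algebra_simps power2_eq_square)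
  have "- Q / 2 + lam * (W + 2 * sqrt \<eta> * I + \<eta> * Q) = lam * W / \<beta> - \<beta> / 2 * (Q - 2 * a * I + a\<^sup>2 * W)"
  proof -
    have "\<beta> * a = 2 * lam * sqrt \<eta>" using \<beta> by (simp add: a_def)
    moreover have "\<beta> / 2 * a\<^sup>2 = 2 * lam\<^sup>2 * \<eta> / \<beta>"
      using \<beta> \<eta> by (simp add: a_def power2_eq_square)
    moreover have "lam * W / \<beta> - 2 * lam\<^sup>2 * \<eta> * W / \<beta> = lam * W"
    proof -
      have "lam * W / \<beta> - 2 * lam\<^sup>2 * \<eta> * W / \<beta> = lam * W * \<beta> / \<beta>"
        unfolding \<beta>_def by (simp add: diff_divide_distrib[symmetric] power2_eq_square algebra_simps)
      then show ?thesis using \<beta> by simp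
    qed
    moreover have "- \<beta> / 2 * (Q - 2 * a * I + a\<^sup>2 * W) = - \<beta> / 2 * Q + (\<beta> * a) * I - (\<beta> / 2 * a\<^sup>2) * W"
      by (simp add: algebra_simps)
    moreover have "- \<beta> / 2 * Q = - Q / 2 + lam * \<eta> * Q" by (simp add: \<beta>_def field_simps)
    ultimately show ?thesis by (simp add: algebra_simps)
  qed
  then show ?thesis
    unfolding a_def[symmetric] e1 e2 unfolding Q_def W_def I_def .
qed

lemma exp_norm_sq_diff_le:
  fixes u z :: "'a::real_inner"
  assumes z: "norm z \<le> S" and lam: "lam \<ge> 0" and \<eta>: "\<eta> > 0" and \<beta>: "\<beta> > 0"
  shows "exp (lam * (norm (u - \<eta> *\<^sub>R z))\<^sup>2 / \<beta>)
       \<le> exp (lam * ((norm u)\<^sup>2 + \<eta>\<^sup>2 * S\<^sup>2) / \<beta>) * exp (- (2 * lam * \<eta> / \<beta>) * (u \<bullet> z))"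
proof -
  have "(norm z)\<^sup>2 \<le> S\<^sup>2" using z by (intro power_mono) auto
  moreover have "(norm (u - \<eta> *\<^sub>R z))\<^sup>2 = (norm u)\<^sup>2 - 2 * \<eta> * (u \<bullet> z) + \<eta>\<^sup>2 * (norm z)\<^sup>2"
    unfolding power2_norm_eq_inner
    by (simp add: inner_diff_left inner_diff_right inner_commute algebra_simps power2_eq_square)
  ultimately have "(norm (u - \<eta> *\<^sub>R z))\<^sup>2 \<le> (norm u)\<^sup>2 + \<eta>\<^sup>2 * S\<^sup>2 - 2 * \<eta> * (u \<bullet> z)"
    using \<eta> by (simp add: mult_left_mono)
  then have "lam * (norm (u - \<eta> *\<^sub>R z))\<^sup>2 / \<beta> \<le> lam * ((norm u)\<^sup>2 + \<eta>\<^sup>2 * S\<^sup>2 - 2 * \<eta> * (u \<bullet> z)) / \<beta>"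
    using lam \<beta> by (intro divide_right_mono mult_left_mono) auto
  also have "\<dots> = lam * ((norm u)\<^sup>2 + \<eta>\<^sup>2 * S\<^sup>2) / \<beta> - 2 * lam * \<eta> / \<beta> * (u \<bullet> z)"
    using \<beta> by (simp add: field_simps)
  finally show ?thesis by (simp add: exp_add[symmetric])
qed

definition std_gaussian_density :: "real^'d \<Rightarrow> real" where
  "std_gaussian_density x = (2 * pi) powr (- real CARD('d) / 2) * exp (- (norm x)\<^sup>2 / 2)"

lemma std_gaussian_density_nonneg: "std_gaussian_density x \<ge> 0"
  by (simp add: std_gaussian_density_def)

lemma std_gaussian_density_measurable[measurable]:
  "std_gaussian_density \<in> borel_measurable borel"
  unfolding std_gaussian_density_def by measurable

lemma distr_std_gaussian_vec:
  assumes "std_gaussian_vec M Y"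
  shows "distr M lborel Y = density lborel (\<lambda>x. ennreal (std_gaussian_density x))"
  using distributed_distr_eq_density assms
  unfolding std_gaussian_vec_def std_gaussian_density_def by blast

lemma nn_integral_std_gaussian_density:
  fixes Y :: "'a \<Rightarrow> real^'d"
  assumes "prob_space M" and "std_gaussian_vec M Y"
  shows "(\<integral>\<^sup>+x. ennreal (std_gaussian_density (x :: real^'d)) \<partial>lborel) = 1"
proof -
  have "Y \<in> measurable M lborel"
    using distributed_measurable assms(2) unfolding std_gaussian_vec_def by blast
  then have "prob_space (distr M lborel Y)" by (rule prob_space.prob_space_distr[OF assms(1)])
  then have "emeasure (density lborel (\<lambda>x::real^'d. ennreal (std_gaussian_density x))) UNIV = 1"
    using prob_space.emeasure_space_1 distr_std_gaussian_vec[OF assms(2)] by fastforce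
  then show ?thesis by (simp add: emeasure_density)
qed

lemma nn_integral_exp_norm_sq_std_gaussian:
  fixes Y :: "'a \<Rightarrow> real^'d" and w :: "real^'d"
  assumes M: "prob_space M" and Y: "std_gaussian_vec M Y"
    and lam: "lam \<ge> 0" and \<eta>: "\<eta> > 0" and small: "2 * lam * \<eta> < 1"
  shows "(\<integral>\<^sup>+y. ennreal (exp (lam * (norm (w + sqrt \<eta> *\<^sub>R y))\<^sup>2)) \<partial>distr M lborel Y)
       = ennreal ((1 - 2 * lam * \<eta>) powr (- real CARD('d) / 2)
                  * exp (lam * (norm w)\<^sup>2 / (1 - 2 * lam * \<eta>)))"
proof -
  define \<beta> where "\<beta> = 1 - 2 * lam * \<eta>"
  define m where "m = (2 * lam * sqrt \<eta> / \<beta>) *\<^sub>R w"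
  define K where "K = exp (lam * (norm w)\<^sup>2 / \<beta>)"
  define c where "c = (2 * pi) powr (- real CARD('d) / 2)"
  have \<beta>: "\<beta> > 0" using small by (simp add: \<beta>_def)
  have shifted: "std_gaussian_density y * exp (lam * (norm (w + sqrt \<eta> *\<^sub>R y))\<^sup>2)
      = K * (c * exp (- \<beta> / 2 * (norm (y - m))\<^sup>2))" for y
    using arg_cong[OF norm_sq_complete_square[OF \<eta> \<beta>[unfolded \<beta>_def], of y w], of exp]
    unfolding std_gaussian_density_def K_def m_def c_def \<beta>_def[symmetric]
    by (simp add: exp_add[symmetric] exp_diff mult_ac)
  have "(\<integral>\<^sup>+y. ennreal (exp (lam * (norm (w + sqrt \<eta> *\<^sub>R y))\<^sup>2)) \<partial>distr M lborel Y)
      = (\<integral>\<^sup>+y. ennreal (K * (c * exp (- \<beta> / 2 * (norm (y - m))\<^sup>2))) \<partial>lborel)"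
    unfolding distr_std_gaussian_vec[OF Y]
    by (subst nn_integral_density)
       (auto simp: shifted ennreal_mult'[symmetric] std_gaussian_density_nonneg)
  also have "\<dots> = (\<integral>\<^sup>+z. ennreal (\<bar>1 / sqrt \<beta>\<bar> ^ DIM(real^'d)) *
        ennreal (K * (c * exp (- \<beta> / 2 * (norm ((m + (1 / sqrt \<beta>) *\<^sub>R z) - m))\<^sup>2))) \<partial>lborel)"
    by (rule nn_integral_lborel_affine) (use \<beta> in \<open>auto simp: c_def\<close>)
  also have "\<dots> = (\<integral>\<^sup>+z. ennreal ((1 / sqrt \<beta>) ^ CARD('d) * K) * ennreal (std_gaussian_density z)
                       \<partial>(lborel :: (real^'d) measure))"
  proof (rule nn_integral_cong)
    fix z :: "real^'d"
    have "- \<beta> / 2 * (norm ((m + (1 / sqrt \<beta>) *\<^sub>R z) - m))\<^sup>2 = - (norm z)\<^sup>2 / 2"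
      using \<beta> by (simp add: power_mult_distrib abs_mult power_divide)
    then show "ennreal (\<bar>1 / sqrt \<beta>\<bar> ^ DIM(real^'d)) *
        ennreal (K * (c * exp (- \<beta> / 2 * (norm ((m + (1 / sqrt \<beta>) *\<^sub>R z) - m))\<^sup>2)))
        = ennreal ((1 / sqrt \<beta>) ^ CARD('d) * K) * ennreal (std_gaussian_density z)"
      using \<beta> by (simp add: std_gaussian_density_def K_def c_def ennreal_mult'[symmetric] mult_ac)
  qed
  also have "\<dots> = ennreal ((1 / sqrt \<beta>) ^ CARD('d) * K)"
    by (simp add: nn_integral_cmult nn_integral_std_gaussian_density[OF M Y])
  also have "(1 / sqrt \<beta>) ^ CARD('d) = \<beta> powr (- real CARD('d) / 2)"
  proof -
    have "1 / sqrt \<beta> = \<beta> powr (- (1 / 2))"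
      using \<beta> by (simp only: powr_minus_divide powr_half_sqrt less_imp_le)
    then show ?thesis using \<beta> by (simp add: powr_power)
  qed
  finally show ?thesis by (simp add: K_def \<beta>_def)
qed

section \<open>Independence and conditional mean zero\<close>

lemma borel_measurable_vec_nth[measurable (raw)]:
  fixes f :: "'b \<Rightarrow> real^'n"
  shows "f \<in> borel_measurable N \<Longrightarrow> (\<lambda>x. f x $ i) \<in> borel_measurable N"
  using measurable_compose[OF _ borel_measurable_nth] .

lemma space_gen_sigma[simp]: "space (gen_sigma M Ys) = space M"
  unfolding gen_sigma_def by (simp add: space_measure_of_conv)

lemma sets_gen_sigma:
  "sets (gen_sigma M Ys) = sigma_sets (space M) (\<Union>Y\<in>Ys. {Y -` A \<inter> space M | A. A \<in> sets borel})"
  unfolding gen_sigma_def by (subst sets_measure_of_conv) auto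

lemma measurable_gen_sigma: "Y \<in> Ys \<Longrightarrow> Y \<in> borel_measurable (gen_sigma M Ys)"
  by (rule measurableI) (auto simp: sets_gen_sigma intro!: sigma_sets.Basic)

lemma subalgebra_gen_sigma:
  assumes "\<And>Y. Y \<in> Ys \<Longrightarrow> Y \<in> borel_measurable M"
  shows "subalgebra M (gen_sigma M Ys)"
  unfolding subalgebra_def sets_gen_sigma
  by (auto intro!: sets.sigma_sets_subset measurable_sets assms)

lemma subalgebra_gen_sigma_mono: "Ys \<subseteq> Zs \<Longrightarrow> subalgebra (gen_sigma M Zs) (gen_sigma M Ys)"
  unfolding subalgebra_def sets_gen_sigma
  by (auto intro!: sigma_sets_mono sigma_sets.Basic)

lemma measurable_ident_subalgebra:
  assumes "subalgebra M N"
  shows "(\<lambda>\<omega>. \<omega>) \<in> measurable M N"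
proof (rule measurableI)
  fix A assume "A \<in> sets N"
  moreover have "A \<subseteq> space M" if "A \<in> sets N" for A
    using sets.sets_into_space[OF that] assms by (simp add: subalgebra_def)
  ultimately show "(\<lambda>\<omega>. \<omega>) -` A \<inter> space M \<in> sets M"
    using assms by (auto simp: subalgebra_def Int_absorb2)
qed (use assms in \<open>auto simp: subalgebra_def\<close>)

text \<open>The identity maps into \<open>N\<close> and \<open>N'\<close> are independent random variables, so the law of
  \<open>\<omega> \<mapsto> (\<omega>, \<omega>)\<close> on \<open>N \<Otimes>\<^sub>M N'\<close> is a product measure and Tonelli applies.\<close>

lemma (in prob_space) nn_integral_indep_subalgebra:
  assumes N: "subalgebra M N" and N': "subalgebra M N'" and indep: "indep_set (sets N) (sets N')"
    and Y: "Y \<in> measurable N' T" and \<Phi>: "\<Phi> \<in> borel_measurable (N \<Otimes>\<^sub>M T)"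
  shows "(\<integral>\<^sup>+\<omega>. \<Phi> (\<omega>, Y \<omega>) \<partial>M) = (\<integral>\<^sup>+\<omega>. (\<integral>\<^sup>+y. \<Phi> (\<omega>, y) \<partial>distr M T Y) \<partial>M)"
proof -
  have id: "(\<lambda>\<omega>. \<omega>) \<in> measurable M N" "(\<lambda>\<omega>. \<omega>) \<in> measurable M N'"
    using N N' by (simp_all add: measurable_ident_subalgebra)
  have Y_M: "Y \<in> measurable M T" by (rule measurable_from_subalg[OF N' Y])
  have sigma_ident: "sigma_sets (space M) {(\<lambda>\<omega>. \<omega>) -` A \<inter> space M | A. A \<in> sets K} \<subseteq> sets K"
    if K: "subalgebra M K" for K
  proof -
    have "{(\<lambda>\<omega>. \<omega>) -` A \<inter> space M | A. A \<in> sets K} \<subseteq> sets K"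
      using K sets.sets_into_space by (fastforce simp: subalgebra_def Int_absorb2)
    from sets.sigma_sets_subset[OF this] show ?thesis using K by (simp add: subalgebra_def)
  qed
  have "indep_set (sigma_sets (space M) {(\<lambda>\<omega>. \<omega>) -` A \<inter> space M | A. A \<in> sets N})
                   (sigma_sets (space M) {(\<lambda>\<omega>. \<omega>) -` A \<inter> space M | A. A \<in> sets N'})"
    using indep unfolding indep_set_def
  proof (rule indep_sets_mono_sets)
    fix i :: bool
    show "case_bool (sigma_sets (space M) {(\<lambda>\<omega>. \<omega>) -` A \<inter> space M | A. A \<in> sets N})
                    (sigma_sets (space M) {(\<lambda>\<omega>. \<omega>) -` A \<inter> space M | A. A \<in> sets N'}) i
          \<subseteq> case_bool (sets N) (sets N') i"
      using sigma_ident[OF N] sigma_ident[OF N'] by (cases i) auto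
  qed
  then have "indep_var N (\<lambda>\<omega>. \<omega>) N' (\<lambda>\<omega>. \<omega>)"
    unfolding indep_var_eq using id by simp
  then have product:
    "distr M N (\<lambda>\<omega>. \<omega>) \<Otimes>\<^sub>M distr M N' (\<lambda>\<omega>. \<omega>) = distr M (N \<Otimes>\<^sub>M N') (\<lambda>\<omega>. (\<omega>, \<omega>))"
    using indep_var_distribution_eq by blast
  interpret N': prob_space "distr M N' (\<lambda>\<omega>. \<omega>)" by (rule prob_space_distr[OF id(2)])
  define \<Psi> where "\<Psi> = (\<lambda>z. \<Phi> (fst z, Y (snd z)))"
  have \<Psi>: "\<Psi> \<in> borel_measurable (N \<Otimes>\<^sub>M N')"
    unfolding \<Psi>_def
    by (rule measurable_compose[OF measurable_Pair[OF measurable_fst measurable_compose[OF measurable_snd Y]] \<Phi>])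
  have "(\<integral>\<^sup>+\<omega>. \<Phi> (\<omega>, Y \<omega>) \<partial>M) = (\<integral>\<^sup>+\<omega>. \<Psi> (\<omega>, \<omega>) \<partial>M)" by (simp add: \<Psi>_def)
  also have "\<dots> = (\<integral>\<^sup>+z. \<Psi> z \<partial>distr M (N \<Otimes>\<^sub>M N') (\<lambda>\<omega>. (\<omega>, \<omega>)))"
    by (subst nn_integral_distr) (auto intro!: measurable_Pair id \<Psi>)
  also have "\<dots> = (\<integral>\<^sup>+x. (\<integral>\<^sup>+y. \<Psi> (x, y) \<partial>distr M N' (\<lambda>\<omega>. \<omega>)) \<partial>distr M N (\<lambda>\<omega>. \<omega>))"
    unfolding product[symmetric] by (rule N'.nn_integral_fst[symmetric]) (use \<Psi> in simp)
  also have "\<dots> = (\<integral>\<^sup>+x. (\<integral>\<^sup>+y. \<Psi> (x, y) \<partial>distr M N' (\<lambda>\<omega>. \<omega>)) \<partial>M)"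
    using \<Psi> by (subst nn_integral_distr) (auto intro!: id N'.borel_measurable_nn_integral_fst)
  also have "\<dots> = (\<integral>\<^sup>+\<omega>. (\<integral>\<^sup>+y. \<Phi> (\<omega>, y) \<partial>distr M T Y) \<partial>M)"
  proof (rule nn_integral_cong)
    fix x assume "x \<in> space M"
    then have "(\<lambda>y. \<Phi> (x, y)) \<in> borel_measurable T"
      using measurable_Pair2[OF \<Phi>] N by (simp add: subalgebra_def)
    then show "(\<integral>\<^sup>+y. \<Psi> (x, y) \<partial>distr M N' (\<lambda>\<omega>. \<omega>)) = (\<integral>\<^sup>+y. \<Phi> (x, y) \<partial>distr M T Y)"
      unfolding \<Psi>_def using Y Y_M id(2) by (simp add: nn_integral_distr)
  qed
  finally show ?thesis .
qed

lemma (in prob_space) integral_inner_eq_0_if_real_cond_exp_eq_0: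
  fixes G Z :: "'a \<Rightarrow> real^'n"
  assumes N: "subalgebra M N"
    and G: "G \<in> borel_measurable N" and Z: "Z \<in> borel_measurable M"
    and mean0: "\<And>i. AE \<omega> in M. real_cond_exp M N (\<lambda>\<omega>. Z \<omega> $ i) \<omega> = 0"
    and int: "\<And>i. integrable M (\<lambda>\<omega>. G \<omega> $ i * Z \<omega> $ i)"
  shows "integrable M (\<lambda>\<omega>. G \<omega> \<bullet> Z \<omega>)" "(\<integral>\<omega>. G \<omega> \<bullet> Z \<omega> \<partial>M) = 0"
proof -
  interpret finite_measure_subalgebra M N
    by unfold_locales (rule N)
  have "(\<integral>\<omega>. G \<omega> $ i * Z \<omega> $ i \<partial>M) = 0" for i
  proof -
    have "(\<integral>\<omega>. G \<omega> $ i * Z \<omega> $ i \<partial>M) = (\<integral>\<omega>. G \<omega> $ i * real_cond_exp M N (\<lambda>\<omega>. Z \<omega> $ i) \<omega> \<partial>M)"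
      using int G Z by (intro real_cond_exp_intg(2)[symmetric]) auto
    also have "\<dots> = 0"
      using mean0[of i] by (intro integral_eq_zero_AE) auto
    finally show ?thesis .
  qed
  then show "integrable M (\<lambda>\<omega>. G \<omega> \<bullet> Z \<omega>)" "(\<integral>\<omega>. G \<omega> \<bullet> Z \<omega> \<partial>M) = 0"
    using int by (simp_all add: inner_vec_def integral_sum)
qed

lemma (in prob_space) nn_integral_mult_exp_inner_le_cosh:
  fixes Z u :: "'a \<Rightarrow> real^'n" and H :: "'a \<Rightarrow> real"
  assumes N: "subalgebra M N" and Z: "Z \<in> borel_measurable M"
    and mean0: "\<And>i. AE \<omega> in M. real_cond_exp M N (\<lambda>\<omega>. Z \<omega> $ i) \<omega> = 0"
    and H: "H \<in> borel_measurable N" "\<And>\<omega>. H \<omega> \<ge> 0" "integrable M H"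
    and u: "u \<in> borel_measurable N"
    and bound: "\<And>\<omega>. \<omega> \<in> space M \<Longrightarrow> H \<omega> \<noteq> 0 \<Longrightarrow> norm (u \<omega>) * norm (Z \<omega>) \<le> B"
  shows "(\<integral>\<^sup>+\<omega>. ennreal (H \<omega> * exp (t * (u \<omega> \<bullet> Z \<omega>))) \<partial>M)
       \<le> (\<integral>\<^sup>+\<omega>. ennreal (H \<omega> * cosh (t * B)) \<partial>M)"
proof -
  note [measurable] = Z measurable_from_subalg[OF N H(1)] measurable_from_subalg[OF N u]
  define G where "G \<omega> = H \<omega> *\<^sub>R u \<omega>" for \<omega>
  have G: "G \<in> borel_measurable N" unfolding G_def using H(1) u by measurable
  have G_bound: "\<bar>G \<omega> $ i * Z \<omega> $ i\<bar> \<le> \<bar>H \<omega> * B\<bar>" if "\<omega> \<in> space M" for \<omega> i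
  proof (cases "H \<omega> = 0")
    case False
    have "\<bar>u \<omega> $ i * Z \<omega> $ i\<bar> \<le> norm (u \<omega>) * norm (Z \<omega>)"
      unfolding abs_mult by (intro mult_mono component_le_norm_cart) auto
    also have "\<dots> \<le> B" by (rule bound[OF that False])
    finally have "H \<omega> * \<bar>u \<omega> $ i * Z \<omega> $ i\<bar> \<le> H \<omega> * B"
      using H(2)[of \<omega>] by (rule mult_left_mono)
    moreover have "B \<ge> 0" using bound[OF that False] by (meson mult_nonneg_nonneg norm_ge_zero order_trans)
    ultimately show ?thesis
      using H(2)[of \<omega>] by (simp add: G_def abs_mult mult.assoc)
  qed (simp add: G_def)
  have [measurable]: "G \<in> borel_measurable M" by (rule measurable_from_subalg[OF N G])
  have "integrable M (\<lambda>\<omega>. G \<omega> $ i * Z \<omega> $ i)" for i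
    by (intro Bochner_Integration.integrable_bound[OF integrable_mult_left[of B, OF H(3)] _ AE_I2])
       (auto intro: G_bound)
  note orthogonal = integral_inner_eq_0_if_real_cond_exp_eq_0[OF N G Z mean0 this]
  have GZ: "G \<omega> \<bullet> Z \<omega> = H \<omega> * (u \<omega> \<bullet> Z \<omega>)" for \<omega> by (simp add: G_def)
  define chord where "chord \<omega> = H \<omega> * cosh (t * B) + sinh (t * B) / B * (G \<omega> \<bullet> Z \<omega>)" for \<omega>
  have chord_int: "integrable M chord" unfolding chord_def using H(3) orthogonal(1) by auto
  have below_chord: "H \<omega> * exp (t * (u \<omega> \<bullet> Z \<omega>)) \<le> chord \<omega>" if "\<omega> \<in> space M" for \<omega>
  proof (cases "H \<omega> = 0")
    case False
    have "\<bar>u \<omega> \<bullet> Z \<omega>\<bar> \<le> B" using Cauchy_Schwarz_ineq2 bound[OF that False] by (rule order_trans)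
    then have "exp (t * (u \<omega> \<bullet> Z \<omega>)) \<le> cosh (t * B) + (u \<omega> \<bullet> Z \<omega>) * (sinh (t * B) / B)"
      by (rule exp_mult_le_cosh_add_chord)
    then show ?thesis
      using H(2)[of \<omega>] mult_left_mono by (fastforce simp: chord_def GZ algebra_simps)
  qed (simp add: chord_def G_def)
  have "(\<integral>\<^sup>+\<omega>. ennreal (H \<omega> * exp (t * (u \<omega> \<bullet> Z \<omega>))) \<partial>M) \<le> (\<integral>\<^sup>+\<omega>. ennreal (chord \<omega>) \<partial>M)"
    by (intro nn_integral_mono ennreal_leI below_chord)
  also have "\<dots> = ennreal (\<integral>\<omega>. chord \<omega> \<partial>M)"
    using below_chord H(2) exp_ge_zero
    by (intro nn_integral_eq_integral[OF chord_int] AE_I2) (meson mult_nonneg_nonneg order_trans)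
  also have "(\<integral>\<omega>. chord \<omega> \<partial>M) = (\<integral>\<omega>. H \<omega> * cosh (t * B) \<partial>M)"
    unfolding chord_def using H(3) orthogonal by simp
  also have "ennreal \<dots> = (\<integral>\<^sup>+\<omega>. ennreal (H \<omega> * cosh (t * B)) \<partial>M)"
    using H(2,3) cosh_real_pos[of "t * B"]
    by (intro nn_integral_eq_integral[symmetric] AE_I2) (auto intro: less_imp_le)
  finally show ?thesis .
qed

section \<open>The noisy gradient iteration\<close>

locale noisy_gradient_descent =
  fixes M :: "'a measure"
    and F :: "real^'d \<Rightarrow> real" and gradF :: "real^'d \<Rightarrow> real^'d"
    and L S r \<eta> :: real and xs x0 :: "real^'d"
    and X \<zeta> \<xi> :: "nat \<Rightarrow> 'a \<Rightarrow> real^'d"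
  assumes M: "prob_space M"
    and convF: "convex_on UNIV F"
    and gradF: "\<And>x. (F has_derivative (\<lambda>h. gradF x \<bullet> h)) (at x)"
    and smooth: "\<And>x y. norm (gradF x - gradF y) \<le> L * norm (x - y)"
    and minim: "\<And>x. F xs \<le> F x"
    and \<zeta>_meas: "\<And>i. \<zeta> i \<in> borel_measurable M"
    and \<zeta>_mean: "\<And>i k. AE \<omega> in M.
                  real_cond_exp M (gen_sigma M (X ` {..i})) (\<lambda>\<omega>. \<zeta> i \<omega> $ k) \<omega> = 0"
    and \<zeta>_bdd: "\<And>i \<omega>. \<omega> \<in> space M \<Longrightarrow> (\<forall>j\<le>i. norm (X j \<omega> - xs) \<le> r) \<Longrightarrow> norm (\<zeta> i \<omega>) \<le> S"
    and \<xi>_meas: "\<And>i. \<xi> i \<in> borel_measurable M"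
    and \<xi>_gauss: "\<And>i. std_gaussian_vec M (\<xi> i)"
    and \<xi>_indep: "\<And>i. prob_space.indep_set M
                     (sets (gen_sigma M (insert (\<zeta> i) (X ` {..i}))))
                     (sets (gen_sigma M {\<xi> i}))"
    and X0: "\<And>\<omega>. \<omega> \<in> space M \<Longrightarrow> X 0 \<omega> = x0"
    and x0r: "norm (x0 - xs) \<le> r"
    and Xrec: "\<And>i \<omega>. \<omega> \<in> space M \<Longrightarrow>
                 X (Suc i) \<omega> = X i \<omega> - \<eta> *\<^sub>R (gradF (X i \<omega>) + \<zeta> i \<omega>) + sqrt \<eta> *\<^sub>R \<xi> i \<omega>"
    and \<eta>_pos: "\<eta> > 0"
begin

definition "drift = 2 * \<eta>\<^sup>2 * (S\<^sup>2 + L\<^sup>2 * r\<^sup>2) + \<eta> * real CARD('d)"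

definition "noise_const C = 2 * \<eta> * S * r + 2 * sqrt \<eta> * C * (r + \<eta> * S + \<eta> * L * r) + \<eta> * C\<^sup>2"

definition "in_ball_upto i \<omega> \<longleftrightarrow> (\<forall>j\<le>i. norm (X j \<omega> - xs) \<le> r)"

definition "increment i \<omega> = (norm (X (Suc i) \<omega> - xs))\<^sup>2 - (norm (X i \<omega> - xs))\<^sup>2 - drift"

text \<open>The increments are frozen at \<open>0\<close> once the iterate has left the ball, so that the
  boundedness of \<open>\<zeta>\<close> is available at every step that contributes.\<close>

definition "stopped_sum k \<omega> = (\<Sum>i<k. if in_ball_upto i \<omega> then increment i \<omega> else 0)"

definition "grad_step k \<omega> = X k \<omega> - xs - \<eta> *\<^sub>R gradF (X k \<omega>)"

definition "past k = gen_sigma M (X ` {..k})"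

definition "past_zeta k = gen_sigma M (insert (\<zeta> k) (X ` {..k}))"

lemma drift_nonneg: "drift \<ge> 0"
  using \<eta>_pos by (simp add: drift_def)

lemma r_nonneg: "r \<ge> 0"
  using x0r norm_ge_zero order_trans by blast

lemma S_nonneg: "S \<ge> 0"
proof -
  interpret prob_space M by (rule M)
  obtain \<omega> where \<omega>: "\<omega> \<in> space M" using not_empty by blast
  have "\<forall>j\<le>0. norm (X j \<omega> - xs) \<le> r" using X0[OF \<omega>] x0r by simp
  from \<zeta>_bdd[OF \<omega> this] show ?thesis by (meson norm_ge_zero order_trans)
qed

lemma L_nonneg: "L \<ge> 0"
proof -
  define v :: "real^'d" where "v = axis undefined 1"
  have "0 \<le> norm (gradF 0 - gradF v)" by simp
  also have "\<dots> \<le> L * norm (0 - v)" by (rule smooth)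
  finally show ?thesis by (simp add: v_def)
qed

lemma gradF_measurable[measurable]: "gradF \<in> borel_measurable borel"
proof (rule borel_measurable_continuous_onI, rule lipschitz_on_continuous_on)
  show "(max L 0)-lipschitz_on UNIV gradF"
  proof (rule lipschitz_onI)
    fix x y :: "real^'d"
    have "L * dist x y \<le> max L 0 * dist x y" by (intro mult_right_mono) auto
    then show "dist (gradF x) (gradF y) \<le> max L 0 * dist x y"
      using smooth[of x y] by (simp add: dist_norm)
  qed simp
qed

lemma X_measurable[measurable]: "X i \<in> borel_measurable M"
proof (induction i)
  case 0
  show ?case by (subst measurable_cong[where g="\<lambda>\<omega>. x0"]) (auto simp: X0)
next
  case (Suc i)
  note [measurable] = Suc \<zeta>_meas \<xi>_meas
  show ?case
    by (subst measurable_cong[where g = "\<lambda>\<omega>. X i \<omega> - \<eta> *\<^sub>R (gradF (X i \<omega>) + \<zeta> i \<omega>) + sqrt \<eta> *\<^sub>R \<xi> i \<omega>"])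
       (auto simp: Xrec)
qed

lemma
  assumes X_N: "\<And>j. j \<le> k \<Longrightarrow> X j \<in> borel_measurable N"
  shows measurable_in_ball_upto: "Measurable.pred N (in_ball_upto k)"
    and measurable_stopped_sum: "stopped_sum k \<in> borel_measurable N"
    and measurable_grad_step: "grad_step k \<in> borel_measurable N"
proof -
  have in_ball_N[measurable]: "Measurable.pred N (in_ball_upto i)" if "i \<le> k" for i
    unfolding in_ball_upto_def
  proof (intro pred_intros_countable allI)
    fix j
    have [measurable]: "X j \<in> borel_measurable N" if "j \<le> k" using that X_N by simp
    show "Measurable.pred N (\<lambda>\<omega>. j \<le> i \<longrightarrow> norm (X j \<omega> - xs) \<le> r)"
      using \<open>i \<le> k\<close> by (cases "j \<le> i") auto
  qed
  then show "Measurable.pred N (in_ball_upto k)" by simp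
  have "(\<lambda>\<omega>. if in_ball_upto i \<omega> then increment i \<omega> else 0) \<in> borel_measurable N" if "i < k" for i
  proof -
    have [measurable]: "X i \<in> borel_measurable N" "X (Suc i) \<in> borel_measurable N"
      "Measurable.pred N (in_ball_upto i)"
      using that X_N in_ball_N by auto
    show ?thesis unfolding increment_def by measurable
  qed
  then show "stopped_sum k \<in> borel_measurable N"
    unfolding stopped_sum_def by (intro borel_measurable_sum) auto
  have [measurable]: "X k \<in> borel_measurable N" using X_N by simp
  show "grad_step k \<in> borel_measurable N"
    unfolding grad_step_def by measurable
qed

lemma X_measurable_past: "j \<le> k \<Longrightarrow> X j \<in> borel_measurable (past k)"
  unfolding past_def by (rule measurable_gen_sigma) auto

lemma X_measurable_past_zeta: "j \<le> k \<Longrightarrow> X j \<in> borel_measurable (past_zeta k)"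
  unfolding past_zeta_def by (rule measurable_gen_sigma) auto

lemma zeta_measurable_past_zeta: "\<zeta> k \<in> borel_measurable (past_zeta k)"
  unfolding past_zeta_def by (rule measurable_gen_sigma) auto

lemma subalgebra_past: "subalgebra M (past k)"
  unfolding past_def by (rule subalgebra_gen_sigma) auto

lemma subalgebra_past_zeta: "subalgebra M (past_zeta k)"
  unfolding past_zeta_def by (rule subalgebra_gen_sigma) (auto intro: \<zeta>_meas)

lemma measurable_past_imp_past_zeta: "f \<in> borel_measurable (past k) \<Longrightarrow> f \<in> borel_measurable (past_zeta k)"
  unfolding past_def past_zeta_def by (rule measurable_from_subalg[OF subalgebra_gen_sigma_mono]) auto

lemma measurable_past_imp_M: "f \<in> borel_measurable (past k) \<Longrightarrow> f \<in> borel_measurable M"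
  by (rule measurable_from_subalg[OF subalgebra_past])

lemma X_Suc_minus_xs:
  "\<omega> \<in> space M \<Longrightarrow> X (Suc k) \<omega> - xs = grad_step k \<omega> - \<eta> *\<^sub>R \<zeta> k \<omega> + sqrt \<eta> *\<^sub>R \<xi> k \<omega>"
  using Xrec[of \<omega> k] by (simp add: grad_step_def algebra_simps)

lemma card_ge_1: "real CARD('d) \<ge> 1"
  using zero_less_card_finite[where 'a='d] by linarith

lemma grad_step_norm_le: "\<eta> * L \<le> 1 \<Longrightarrow> norm (grad_step k \<omega>) \<le> norm (X k \<omega> - xs)"
  unfolding grad_step_def by (rule gradient_step_dist_le[OF convF gradF smooth minim \<eta>_pos])

lemma
  assumes "C \<ge> sqrt (2 * real CARD('d))"
  shows noise_level_nonneg: "C \<ge> 0" and noise_level_sq: "C\<^sup>2 \<ge> 2 * real CARD('d)"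
proof -
  show "C \<ge> 0" using assms real_sqrt_ge_zero[of "2 * real CARD('d)"] by linarith
  show "C\<^sup>2 \<ge> 2 * real CARD('d)" using assms power_mono[OF assms, of 2] by simp
qed

lemma noise_const_ge: "C \<ge> 0 \<Longrightarrow> noise_const C \<ge> 2 * sqrt \<eta> * C * r"
proof -
  assume C: "C \<ge> 0"
  have "r \<le> r + \<eta> * S + \<eta> * L * r"
    using \<eta>_pos S_nonneg L_nonneg r_nonneg by simp
  then have "2 * sqrt \<eta> * C * r \<le> 2 * sqrt \<eta> * C * (r + \<eta> * S + \<eta> * L * r)"
    using C \<eta>_pos by (intro mult_left_mono) auto
  moreover have "2 * \<eta> * S * r \<ge> 0" "\<eta> * C\<^sup>2 \<ge> 0" using \<eta>_pos S_nonneg r_nonneg by auto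
  ultimately show ?thesis unfolding noise_const_def by linarith
qed

lemma two_lam_eta_less_1:
  assumes r: "r > 0" and C: "C \<ge> sqrt (2 * real CARD('d))"
    and lam: "lam \<ge> 0" "lam * (noise_const C)\<^sup>2 \<le> r\<^sup>2"
  shows "2 * lam * \<eta> < 1"
proof -
  have "(2 * sqrt \<eta> * C * r)\<^sup>2 \<le> (noise_const C)\<^sup>2"
    using noise_const_ge noise_level_nonneg[OF C] \<eta>_pos r by (intro power_mono) auto
  moreover have "(2 * sqrt \<eta> * C * r)\<^sup>2 = 4 * \<eta> * C\<^sup>2 * r\<^sup>2"
    using \<eta>_pos by (simp add: power_mult_distrib)
  moreover have "C\<^sup>2 \<ge> 2"
    using noise_level_sq[OF C] card_ge_1 by linarith
  moreover have "(4 * \<eta> * r\<^sup>2) * 2 \<le> (4 * \<eta> * r\<^sup>2) * C\<^sup>2"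
    using \<open>C\<^sup>2 \<ge> 2\<close> \<eta>_pos by (intro mult_left_mono) auto
  ultimately have "lam * (8 * \<eta> * r\<^sup>2) \<le> lam * (noise_const C)\<^sup>2"
    using lam by (intro mult_left_mono) (auto simp: algebra_simps)
  then have "(8 * lam * \<eta>) * r\<^sup>2 \<le> 1 * r\<^sup>2" using lam by (simp add: algebra_simps)
  then show ?thesis using r by simp
qed

lemma nn_integral_exp_norm_sq_noise:
  assumes G: "G \<in> borel_measurable (past_zeta k)" "\<And>\<omega>. G \<omega> \<ge> 0"
    and w: "w \<in> borel_measurable (past_zeta k)"
    and lam: "lam \<ge> 0" "2 * lam * \<eta> < 1"
  shows "(\<integral>\<^sup>+\<omega>. ennreal (G \<omega> * exp (lam * (norm (w \<omega> + sqrt \<eta> *\<^sub>R \<xi> k \<omega>))\<^sup>2)) \<partial>M)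
       = (\<integral>\<^sup>+\<omega>. ennreal (G \<omega> * ((1 - 2 * lam * \<eta>) powr (- real CARD('d) / 2)
                                  * exp (lam * (norm (w \<omega>))\<^sup>2 / (1 - 2 * lam * \<eta>)))) \<partial>M)"
proof -
  interpret prob_space M by (rule M)
  note [measurable] = G(1) w
  have \<xi>: "\<xi> k \<in> measurable (gen_sigma M {\<xi> k}) lborel"
    using measurable_gen_sigma[of "\<xi> k" "{\<xi> k}" M] by simp
  have "(\<integral>\<^sup>+\<omega>. ennreal (G \<omega> * exp (lam * (norm (w \<omega> + sqrt \<eta> *\<^sub>R \<xi> k \<omega>))\<^sup>2)) \<partial>M)
      = (\<integral>\<^sup>+\<omega>. (\<integral>\<^sup>+y. ennreal (G \<omega> * exp (lam * (norm (w \<omega> + sqrt \<eta> *\<^sub>R y))\<^sup>2)) \<partial>distr M lborel (\<xi> k)) \<partial>M)"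
    using nn_integral_indep_subalgebra[OF subalgebra_past_zeta subalgebra_gen_sigma \<xi>_indep[of k, folded past_zeta_def] \<xi>,
        of "\<lambda>(\<omega>, y). ennreal (G \<omega> * exp (lam * (norm (w \<omega> + sqrt \<eta> *\<^sub>R y))\<^sup>2))"] \<xi>_meas
    by simp
  also have "\<dots> = (\<integral>\<^sup>+\<omega>. ennreal (G \<omega> * ((1 - 2 * lam * \<eta>) powr (- real CARD('d) / 2)
                                  * exp (lam * (norm (w \<omega>))\<^sup>2 / (1 - 2 * lam * \<eta>)))) \<partial>M)"
  proof (rule nn_integral_cong)
    fix \<omega>
    have "(\<integral>\<^sup>+y. ennreal (G \<omega> * exp (lam * (norm (w \<omega> + sqrt \<eta> *\<^sub>R y))\<^sup>2)) \<partial>distr M lborel (\<xi> k))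
        = ennreal (G \<omega>) * (\<integral>\<^sup>+y. ennreal (exp (lam * (norm (w \<omega> + sqrt \<eta> *\<^sub>R y))\<^sup>2)) \<partial>distr M lborel (\<xi> k))"
      using G(2)[of \<omega>] \<xi>_meas[of k] by (simp add: ennreal_mult nn_integral_cmult)
    also have "\<dots> = ennreal (G \<omega> * ((1 - 2 * lam * \<eta>) powr (- real CARD('d) / 2)
                                  * exp (lam * (norm (w \<omega>))\<^sup>2 / (1 - 2 * lam * \<eta>))))"
      using G(2)[of \<omega>] nn_integral_exp_norm_sq_std_gaussian[OF M \<xi>_gauss lam(1) \<eta>_pos lam(2)]
      by (simp add: ennreal_mult)
    finally show "(\<integral>\<^sup>+y. ennreal (G \<omega> * exp (lam * (norm (w \<omega> + sqrt \<eta> *\<^sub>R y))\<^sup>2)) \<partial>distr M lborel (\<xi> k))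
        = ennreal (G \<omega> * ((1 - 2 * lam * \<eta>) powr (- real CARD('d) / 2)
                                  * exp (lam * (norm (w \<omega>))\<^sup>2 / (1 - 2 * lam * \<eta>))))" .
  qed
  finally show ?thesis .
qed

text \<open>The factor left after integrating \<open>exp (lam * increment k)\<close> over the Gaussian noise
  \<open>\<xi> k\<close> and bounding the \<open>\<zeta> k\<close>-dependence by the linear term \<open>grad_step k \<bullet> \<zeta> k\<close>.\<close>

definition "noise_weight lam k \<omega> =
  (1 - 2 * lam * \<eta>) powr (- real CARD('d) / 2)
  * exp (lam * ((norm (grad_step k \<omega>))\<^sup>2 + \<eta>\<^sup>2 * S\<^sup>2) / (1 - 2 * lam * \<eta>)
         - lam * ((norm (X k \<omega> - xs))\<^sup>2 + drift))"

lemma noise_weight_measurable_past[measurable]: "noise_weight lam k \<in> borel_measurable (past k)"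
proof -
  have [measurable]: "X k \<in> borel_measurable (past k)" "grad_step k \<in> borel_measurable (past k)"
    using X_measurable_past measurable_grad_step[OF X_measurable_past] by auto
  show ?thesis unfolding noise_weight_def by measurable
qed

lemma nn_integral_exp_increment_le:
  assumes h: "h \<in> borel_measurable (past k)" "\<And>\<omega>. h \<omega> \<ge> 0"
    and lam: "lam \<ge> 0" "2 * lam * \<eta> < 1"
  shows "(\<integral>\<^sup>+\<omega>. ennreal (h \<omega> * (if in_ball_upto k \<omega> then exp (lam * increment k \<omega>) else 0)) \<partial>M)
       \<le> (\<integral>\<^sup>+\<omega>. ennreal (h \<omega> * (if in_ball_upto k \<omega> then noise_weight lam k \<omega> else 0)
                           * exp (- (2 * lam * \<eta> / (1 - 2 * lam * \<eta>)) * (grad_step k \<omega> \<bullet> \<zeta> k \<omega>))) \<partial>M)"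
proof -
  define \<beta> where "\<beta> = 1 - 2 * lam * \<eta>"
  define H where "H \<omega> = h \<omega> * (if in_ball_upto k \<omega> then exp (- lam * ((norm (X k \<omega> - xs))\<^sup>2 + drift)) else 0)" for \<omega>
  define w where "w \<omega> = grad_step k \<omega> - \<eta> *\<^sub>R \<zeta> k \<omega>" for \<omega>
  have \<beta>: "\<beta> > 0" using lam by (simp add: \<beta>_def)
  have H_nonneg: "H \<omega> \<ge> 0" for \<omega> using h(2)[of \<omega>] by (simp add: H_def)
  have [measurable]: "h \<in> borel_measurable (past_zeta k)" "Measurable.pred (past_zeta k) (in_ball_upto k)"
    "X k \<in> borel_measurable (past_zeta k)" "grad_step k \<in> borel_measurable (past_zeta k)"
    "\<zeta> k \<in> borel_measurable (past_zeta k)"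
    using measurable_past_imp_past_zeta[OF h(1)] X_measurable_past_zeta zeta_measurable_past_zeta
      measurable_in_ball_upto measurable_grad_step
    by auto
  have "(\<integral>\<^sup>+\<omega>. ennreal (h \<omega> * (if in_ball_upto k \<omega> then exp (lam * increment k \<omega>) else 0)) \<partial>M)
      = (\<integral>\<^sup>+\<omega>. ennreal (H \<omega> * exp (lam * (norm (w \<omega> + sqrt \<eta> *\<^sub>R \<xi> k \<omega>))\<^sup>2)) \<partial>M)"
  proof (rule nn_integral_cong)
    fix \<omega> assume "\<omega> \<in> space M"
    then have "lam * increment k \<omega>
        = - lam * ((norm (X k \<omega> - xs))\<^sup>2 + drift) + lam * (norm (w \<omega> + sqrt \<eta> *\<^sub>R \<xi> k \<omega>))\<^sup>2"
      unfolding increment_def w_def X_Suc_minus_xs[OF \<open>\<omega> \<in> space M\<close>] by (simp add: algebra_simps)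
    then show "ennreal (h \<omega> * (if in_ball_upto k \<omega> then exp (lam * increment k \<omega>) else 0))
        = ennreal (H \<omega> * exp (lam * (norm (w \<omega> + sqrt \<eta> *\<^sub>R \<xi> k \<omega>))\<^sup>2))"
      by (simp add: H_def exp_add[symmetric] mult.assoc)
  qed
  also have "\<dots> = (\<integral>\<^sup>+\<omega>. ennreal (H \<omega> * (\<beta> powr (- real CARD('d) / 2) * exp (lam * (norm (w \<omega>))\<^sup>2 / \<beta>))) \<partial>M)"
    unfolding \<beta>_def using H_nonneg lam
    by (intro nn_integral_exp_norm_sq_noise) (auto simp: H_def w_def)
  also have "\<dots> \<le> (\<integral>\<^sup>+\<omega>. ennreal (h \<omega> * (if in_ball_upto k \<omega> then noise_weight lam k \<omega> else 0)
                           * exp (- (2 * lam * \<eta> / (1 - 2 * lam * \<eta>)) * (grad_step k \<omega> \<bullet> \<zeta> k \<omega>))) \<partial>M)"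
  proof (intro nn_integral_mono ennreal_leI)
    fix \<omega> assume \<omega>: "\<omega> \<in> space M"
    show "H \<omega> * (\<beta> powr (- real CARD('d) / 2) * exp (lam * (norm (w \<omega>))\<^sup>2 / \<beta>))
        \<le> h \<omega> * (if in_ball_upto k \<omega> then noise_weight lam k \<omega> else 0)
          * exp (- (2 * lam * \<eta> / (1 - 2 * lam * \<eta>)) * (grad_step k \<omega> \<bullet> \<zeta> k \<omega>))"
    proof (cases "in_ball_upto k \<omega>")
      case True
      let ?u = "grad_step k \<omega>"
      have "norm (\<zeta> k \<omega>) \<le> S" using \<zeta>_bdd[OF \<omega>] True by (simp add: in_ball_upto_def)
      from exp_norm_sq_diff_le[OF this lam(1) \<eta>_pos \<beta>, of ?u]
      have "exp (lam * (norm (w \<omega>))\<^sup>2 / \<beta>)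
          \<le> exp (lam * ((norm ?u)\<^sup>2 + \<eta>\<^sup>2 * S\<^sup>2) / \<beta>) * exp (- (2 * lam * \<eta> / \<beta>) * (?u \<bullet> \<zeta> k \<omega>))"
        by (simp add: w_def)
      then have "H \<omega> * (\<beta> powr (- real CARD('d) / 2) * exp (lam * (norm (w \<omega>))\<^sup>2 / \<beta>))
          \<le> H \<omega> * (\<beta> powr (- real CARD('d) / 2) * (exp (lam * ((norm ?u)\<^sup>2 + \<eta>\<^sup>2 * S\<^sup>2) / \<beta>)
                 * exp (- (2 * lam * \<eta> / \<beta>) * (?u \<bullet> \<zeta> k \<omega>))))"
        using H_nonneg[of \<omega>] by (intro mult_left_mono) auto
      also have "\<dots> = h \<omega> * noise_weight lam k \<omega> * exp (- (2 * lam * \<eta> / \<beta>) * (?u \<bullet> \<zeta> k \<omega>))"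
        using True unfolding H_def noise_weight_def \<beta>_def[symmetric] by (simp add: exp_diff exp_minus exp_add field_simps)
      finally show ?thesis using True by (simp add: \<beta>_def)
    qed (simp add: H_def)
  qed
  finally show ?thesis .
qed

lemma in_ball_upto_imp_le:
  assumes "in_ball_upto k \<omega>" and "\<eta> * L \<le> 1"
  shows "norm (grad_step k \<omega>) \<le> r" "norm (X k \<omega> - xs) \<le> r"
  using assms grad_step_norm_le[of k \<omega>] by (auto simp: in_ball_upto_def)

lemma noise_weight_le:
  assumes "in_ball_upto k \<omega>" and lam: "lam \<ge> 0" "2 * lam * \<eta> < 1" and "\<eta> * L \<le> 1"
  shows "noise_weight lam k \<omega>
       \<le> (1 - 2 * lam * \<eta>) powr (- real CARD('d) / 2) * exp (lam * (r\<^sup>2 + \<eta>\<^sup>2 * S\<^sup>2) / (1 - 2 * lam * \<eta>))"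
proof -
  have "(norm (grad_step k \<omega>))\<^sup>2 \<le> r\<^sup>2"
    using in_ball_upto_imp_le[OF assms(1,4)] by (intro power_mono) auto
  then have "lam * ((norm (grad_step k \<omega>))\<^sup>2 + \<eta>\<^sup>2 * S\<^sup>2) / (1 - 2 * lam * \<eta>)
      \<le> lam * (r\<^sup>2 + \<eta>\<^sup>2 * S\<^sup>2) / (1 - 2 * lam * \<eta>)"
    using lam by (intro divide_right_mono mult_left_mono) auto
  moreover have "lam * ((norm (X k \<omega> - xs))\<^sup>2 + drift) \<ge> 0"
    using lam drift_nonneg by simp
  ultimately show ?thesis
    unfolding noise_weight_def by (intro mult_left_mono) auto
qed

lemma noise_weight_mult_cosh_le:
  assumes "in_ball_upto k \<omega>" and C: "C \<ge> sqrt (2 * real CARD('d))"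
    and lam: "lam \<ge> 0" "lam * (noise_const C)\<^sup>2 \<le> r\<^sup>2"
    and r: "r > 0" and \<eta>L: "\<eta> * L \<le> 1" and \<eta>d: "\<eta> * real CARD('d) \<le> r\<^sup>2"
  shows "noise_weight lam k \<omega> * cosh (2 * lam * \<eta> * r * S / (1 - 2 * lam * \<eta>))
       \<le> exp (lam\<^sup>2 * (noise_const C)\<^sup>2 / 2)"
  unfolding noise_weight_def drift_def noise_const_def
proof (rule increment_mgf_real_bound[OF \<eta>_pos r S_nonneg L_nonneg card_ge_1
      noise_level_nonneg[OF C] noise_level_sq[OF C] \<eta>d])
  show "(norm (grad_step k \<omega>))\<^sup>2 \<le> (norm (X k \<omega> - xs))\<^sup>2"
    using grad_step_norm_le[OF \<eta>L] by (intro power_mono) auto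
  show "(norm (X k \<omega> - xs))\<^sup>2 \<le> r\<^sup>2"
    using in_ball_upto_imp_le[OF assms(1) \<eta>L] by (intro power_mono) auto
  show "lam * (2 * \<eta> * S * r + 2 * sqrt \<eta> * C * (r + \<eta> * S + \<eta> * L * r) + \<eta> * C\<^sup>2)\<^sup>2 \<le> r\<^sup>2"
    using lam(2) unfolding noise_const_def .
qed (simp_all add: lam(1))

lemma nn_integral_exp_increment_le_mgf:
  assumes h: "h \<in> borel_measurable (past k)" "\<And>\<omega>. h \<omega> \<ge> 0" "integrable M h"
    and C: "C \<ge> sqrt (2 * real CARD('d))"
    and lam: "lam \<ge> 0" "lam * (noise_const C)\<^sup>2 \<le> r\<^sup>2"
    and r: "r > 0" and \<eta>L: "\<eta> * L \<le> 1" and \<eta>d: "\<eta> * real CARD('d) \<le> r\<^sup>2"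
  shows "(\<integral>\<^sup>+\<omega>. ennreal (h \<omega> * (if in_ball_upto k \<omega> then exp (lam * increment k \<omega>) else 0)) \<partial>M)
       \<le> ennreal (exp (lam\<^sup>2 * (noise_const C)\<^sup>2 / 2))
         * (\<integral>\<^sup>+\<omega>. ennreal (h \<omega> * (if in_ball_upto k \<omega> then 1 else 0)) \<partial>M)"
proof -
  interpret prob_space M by (rule M)
  define t where "t = - (2 * lam * \<eta> / (1 - 2 * lam * \<eta>))"
  define K where "K \<omega> = h \<omega> * (if in_ball_upto k \<omega> then noise_weight lam k \<omega> else 0)" for \<omega>
  define K0 where "K0 = (1 - 2 * lam * \<eta>) powr (- real CARD('d) / 2)
                        * exp (lam * (r\<^sup>2 + \<eta>\<^sup>2 * S\<^sup>2) / (1 - 2 * lam * \<eta>))"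
  have small: "2 * lam * \<eta> < 1" by (rule two_lam_eta_less_1[OF r C lam])
  have [measurable]: "h \<in> borel_measurable (past k)" "Measurable.pred (past k) (in_ball_upto k)"
    using h(1) measurable_in_ball_upto[OF X_measurable_past] by auto
  have K: "K \<in> borel_measurable (past k)" unfolding K_def by measurable
  have K_nonneg: "K \<omega> \<ge> 0" for \<omega> using h(2)[of \<omega>] by (simp add: K_def noise_weight_def)
  have "\<bar>K \<omega>\<bar> \<le> \<bar>h \<omega> * K0\<bar>" for \<omega>
    using noise_weight_le[OF _ lam(1) small \<eta>L, of k \<omega>] h(2)[of \<omega>] K_nonneg[of \<omega>]
    by (auto simp: K_def K0_def mult_left_mono)
  then have K_integrable: "integrable M K"
    using measurable_past_imp_M[OF K]
    by (intro Bochner_Integration.integrable_bound[OF integrable_mult_left[of K0, OF h(3)] _ AE_I2]) auto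
  have "(\<integral>\<^sup>+\<omega>. ennreal (h \<omega> * (if in_ball_upto k \<omega> then exp (lam * increment k \<omega>) else 0)) \<partial>M)
      \<le> (\<integral>\<^sup>+\<omega>. ennreal (K \<omega> * exp (t * (grad_step k \<omega> \<bullet> \<zeta> k \<omega>))) \<partial>M)"
    unfolding K_def t_def by (rule nn_integral_exp_increment_le[OF h(1,2) lam(1) small])
  also have "\<dots> \<le> (\<integral>\<^sup>+\<omega>. ennreal (K \<omega> * cosh (t * (r * S))) \<partial>M)"
  proof (rule nn_integral_mult_exp_inner_le_cosh[OF subalgebra_past \<zeta>_meas _ K K_nonneg K_integrable])
    show "AE \<omega> in M. real_cond_exp M (past k) (\<lambda>\<omega>. \<zeta> k \<omega> $ i) \<omega> = 0" for i
      using \<zeta>_mean[of k i] by (simp add: past_def)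
    show "grad_step k \<in> borel_measurable (past k)" by (rule measurable_grad_step[OF X_measurable_past])
    fix \<omega> assume \<omega>: "\<omega> \<in> space M" and "K \<omega> \<noteq> 0"
    then have "in_ball_upto k \<omega>" by (auto simp: K_def split: if_splits)
    then show "norm (grad_step k \<omega>) * norm (\<zeta> k \<omega>) \<le> r * S"
      using in_ball_upto_imp_le[OF _ \<eta>L] \<zeta>_bdd[OF \<omega>] r by (intro mult_mono) (auto simp: in_ball_upto_def)
  qed
  also have "\<dots> \<le> (\<integral>\<^sup>+\<omega>. ennreal (exp (lam\<^sup>2 * (noise_const C)\<^sup>2 / 2))
                         * ennreal (h \<omega> * (if in_ball_upto k \<omega> then 1 else 0)) \<partial>M)"
  proof (intro nn_integral_mono)
    fix \<omega>
    show "ennreal (K \<omega> * cosh (t * (r * S)))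
        \<le> ennreal (exp (lam\<^sup>2 * (noise_const C)\<^sup>2 / 2)) * ennreal (h \<omega> * (if in_ball_upto k \<omega> then 1 else 0))"
    proof (cases "in_ball_upto k \<omega>")
      case True
      have cosh_eq: "cosh (t * (r * S)) = cosh (2 * lam * \<eta> * r * S / (1 - 2 * lam * \<eta>))"
        using cosh_minus[of "2 * lam * \<eta> * r * S / (1 - 2 * lam * \<eta>)"] by (simp add: t_def mult.assoc)
      have "noise_weight lam k \<omega> * cosh (t * (r * S)) \<le> exp (lam\<^sup>2 * (noise_const C)\<^sup>2 / 2)"
        unfolding cosh_eq by (rule noise_weight_mult_cosh_le[OF True C lam r \<eta>L \<eta>d])
      then have "K \<omega> * cosh (t * (r * S)) \<le> h \<omega> * exp (lam\<^sup>2 * (noise_const C)\<^sup>2 / 2)"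
        using True mult_left_mono[OF _ h(2)[of \<omega>]] by (simp add: K_def mult.assoc)
      then show ?thesis
        using True h(2)[of \<omega>] by (simp add: ennreal_mult'[symmetric] mult.commute ennreal_leI)
    qed (simp add: K_def)
  qed
  also have "\<dots> = ennreal (exp (lam\<^sup>2 * (noise_const C)\<^sup>2 / 2))
                   * (\<integral>\<^sup>+\<omega>. ennreal (h \<omega> * (if in_ball_upto k \<omega> then 1 else 0)) \<partial>M)"
  proof (rule nn_integral_cmult)
    have "(\<lambda>\<omega>. h \<omega> * (if in_ball_upto k \<omega> then 1 else 0)) \<in> borel_measurable (past k)" by measurable
    from measurable_past_imp_M[OF this]
    show "(\<lambda>\<omega>. ennreal (h \<omega> * (if in_ball_upto k \<omega> then 1 else 0))) \<in> borel_measurable M" by simp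
  qed
  finally show ?thesis .
qed

lemma nn_integral_exp_stopped_sum_Suc_le:
  assumes h: "integrable M (\<lambda>\<omega>. exp (lam * stopped_sum k \<omega>))"
    and C: "C \<ge> sqrt (2 * real CARD('d))"
    and lam: "lam \<ge> 0" "lam * (noise_const C)\<^sup>2 \<le> r\<^sup>2"
    and r: "r > 0" and \<eta>L: "\<eta> * L \<le> 1" and \<eta>d: "\<eta> * real CARD('d) \<le> r\<^sup>2"
  shows "(\<integral>\<^sup>+\<omega>. ennreal (exp (lam * stopped_sum (Suc k) \<omega>)) \<partial>M)
       \<le> ennreal (exp (lam\<^sup>2 * (noise_const C)\<^sup>2 / 2)) * (\<integral>\<^sup>+\<omega>. ennreal (exp (lam * stopped_sum k \<omega>)) \<partial>M)"
proof -
  define E where "E = exp (lam\<^sup>2 * (noise_const C)\<^sup>2 / 2)"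
  define h where "h \<omega> = exp (lam * stopped_sum k \<omega>)" for \<omega>
  have h_past: "h \<in> borel_measurable (past k)"
    unfolding h_def using measurable_stopped_sum[OF X_measurable_past] by measurable
  have [measurable]: "h \<in> borel_measurable M" "Measurable.pred M (in_ball_upto k)"
    using measurable_past_imp_M[OF h_past] measurable_in_ball_upto[OF X_measurable] by auto
  have [measurable]: "increment k \<in> borel_measurable M"
    unfolding increment_def by measurable
  define inside outside where
    "inside = (\<integral>\<^sup>+\<omega>. ennreal (h \<omega> * (if in_ball_upto k \<omega> then 1 else 0)) \<partial>M)" and
    "outside = (\<integral>\<^sup>+\<omega>. ennreal (h \<omega> * (if in_ball_upto k \<omega> then 0 else 1)) \<partial>M)"
  have sum_eq: "inside + outside = (\<integral>\<^sup>+\<omega>. ennreal (h \<omega>) \<partial>M)"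
    unfolding inside_def outside_def
    by (subst nn_integral_add[symmetric]) (auto intro!: nn_integral_cong)
  have "(\<integral>\<^sup>+\<omega>. ennreal (exp (lam * stopped_sum (Suc k) \<omega>)) \<partial>M)
      = (\<integral>\<^sup>+\<omega>. ennreal (h \<omega> * (if in_ball_upto k \<omega> then exp (lam * increment k \<omega>) else 0))
                 + ennreal (h \<omega> * (if in_ball_upto k \<omega> then 0 else 1)) \<partial>M)"
    by (intro nn_integral_cong) (simp add: stopped_sum_def h_def exp_add distrib_left)
  also have "\<dots> = (\<integral>\<^sup>+\<omega>. ennreal (h \<omega> * (if in_ball_upto k \<omega> then exp (lam * increment k \<omega>) else 0)) \<partial>M)
                   + outside"
    unfolding outside_def by (rule nn_integral_add) measurable
  also have "\<dots> \<le> ennreal E * inside + ennreal E * outside"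
  proof (rule add_mono)
    show "(\<integral>\<^sup>+\<omega>. ennreal (h \<omega> * (if in_ball_upto k \<omega> then exp (lam * increment k \<omega>) else 0)) \<partial>M)
        \<le> ennreal E * inside"
      unfolding E_def inside_def
      by (rule nn_integral_exp_increment_le_mgf[OF h_past _ h[folded h_def] C lam r \<eta>L \<eta>d])
         (simp add: h_def)
    show "outside \<le> ennreal E * outside"
      using mult_right_mono[of 1 "ennreal E" outside] by (simp add: E_def)
  qed
  also have "ennreal E * inside + ennreal E * outside = ennreal E * (\<integral>\<^sup>+\<omega>. ennreal (h \<omega>) \<partial>M)"
    using sum_eq by (metis distrib_left)
  finally show ?thesis by (simp add: E_def h_def)
qed

lemma nn_integral_exp_stopped_sum_le:
  assumes C: "C \<ge> sqrt (2 * real CARD('d))"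
    and lam: "lam \<ge> 0" "lam * (noise_const C)\<^sup>2 \<le> r\<^sup>2"
    and r: "r > 0" and \<eta>L: "\<eta> * L \<le> 1" and \<eta>d: "\<eta> * real CARD('d) \<le> r\<^sup>2"
  shows "(\<integral>\<^sup>+\<omega>. ennreal (exp (lam * stopped_sum k \<omega>)) \<partial>M)
       \<le> ennreal (exp (real k * (lam\<^sup>2 * (noise_const C)\<^sup>2 / 2)))"
proof (induction k)
  case 0
  interpret prob_space M by (rule M)
  show ?case by (simp add: stopped_sum_def emeasure_space_1)
next
  case (Suc k)
  have [measurable]: "stopped_sum k \<in> borel_measurable M"
    by (rule measurable_stopped_sum[OF X_measurable])
  have "(\<integral>\<^sup>+\<omega>. ennreal (exp (lam * stopped_sum k \<omega>)) \<partial>M) < \<infinity>"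
    using Suc.IH by (rule le_less_trans) simp
  then obtain I where "(\<integral>\<^sup>+\<omega>. ennreal (exp (lam * stopped_sum k \<omega>)) \<partial>M) = ennreal I"
    by (cases "\<integral>\<^sup>+\<omega>. ennreal (exp (lam * stopped_sum k \<omega>)) \<partial>M") auto
  then have "integrable M (\<lambda>\<omega>. exp (lam * stopped_sum k \<omega>))"
    by (intro integrableI_nn_integral_finite[where x=I]) auto
  from nn_integral_exp_stopped_sum_Suc_le[OF this C lam r \<eta>L \<eta>d]
  have "(\<integral>\<^sup>+\<omega>. ennreal (exp (lam * stopped_sum (Suc k) \<omega>)) \<partial>M)
      \<le> ennreal (exp (lam\<^sup>2 * (noise_const C)\<^sup>2 / 2)) * ennreal (exp (real k * (lam\<^sup>2 * (noise_const C)\<^sup>2 / 2)))"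
    using Suc.IH by (rule order_trans[OF _ mult_left_mono]) simp
  also have "\<dots> = ennreal (exp (real (Suc k) * (lam\<^sup>2 * (noise_const C)\<^sup>2 / 2)))"
    by (simp add: ennreal_mult'[symmetric] exp_add[symmetric] algebra_simps)
  finally show ?case .
qed

lemma sum_increment:
  "(\<Sum>i<k. increment i \<omega>) = (norm (X k \<omega> - xs))\<^sup>2 - (norm (X 0 \<omega> - xs))\<^sup>2 - real k * drift"
  by (induction k) (simp_all add: increment_def algebra_simps)

text \<open>At the first exit time \<open>k\<close> no increment has been frozen yet, so the stopped sum
  telescopes to \<open>(norm (X k \<omega> - xs))\<^sup>2 - (norm (x0 - xs))\<^sup>2 - k * drift\<close>.\<close>

lemma exit_imp_stopped_sum_gt:
  assumes \<omega>: "\<omega> \<in> space M" and exit: "\<not> (\<forall>j\<in>{1..n}. norm (X j \<omega> - xs) \<le> r)"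
  shows "\<exists>k\<in>{1..n}. stopped_sum k \<omega> > r\<^sup>2 - (norm (x0 - xs))\<^sup>2 - real n * drift"
proof -
  define outside where "outside j \<longleftrightarrow> norm (X j \<omega> - xs) > r" for j
  from exit obtain j where j: "j \<in> {1..n}" "outside j" by (auto simp: outside_def not_le)
  define k where "k = (LEAST j. outside j)"
  have k: "outside k" "k \<le> j" using j(2) unfolding k_def by (auto intro: LeastI Least_le)
  have before: "in_ball_upto i \<omega>" if "i < k" for i
    using that not_less_Least[of _ outside] unfolding k_def in_ball_upto_def outside_def
    by (meson le_less_trans not_le)
  have "k \<noteq> 0"
  proof
    assume "k = 0"
    then show False using k(1) X0[OF \<omega>] x0r by (simp add: outside_def)
  qed
  have "stopped_sum k \<omega> = (\<Sum>i<k. increment i \<omega>)"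
    unfolding stopped_sum_def by (rule sum.cong) (auto simp: before)
  also have "\<dots> = (norm (X k \<omega> - xs))\<^sup>2 - (norm (x0 - xs))\<^sup>2 - real k * drift"
    using sum_increment[where k=k and \<omega>=\<omega>] X0[OF \<omega>] by simp
  also have "\<dots> > r\<^sup>2 - (norm (x0 - xs))\<^sup>2 - real n * drift"
  proof -
    have "r\<^sup>2 < (norm (X k \<omega> - xs))\<^sup>2"
      using k(1) r_nonneg unfolding outside_def by (intro power_strict_mono) auto
    moreover have "real k * drift \<le> real n * drift"
      using k(2) j(1) drift_nonneg by (intro mult_right_mono) auto
    ultimately show ?thesis by linarith
  qed
  finally show ?thesis using \<open>k \<noteq> 0\<close> k(2) j(1) by auto
qed

lemma
  assumes n: "n \<ge> 1" and r_big: "r\<^sup>2 > (norm (x0 - xs))\<^sup>2 + real n * drift"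
  shows radius_pos: "r > 0"
    and step_size_le: "\<eta> * L \<le> 1"
    and noise_variance_le: "\<eta> * real CARD('d) \<le> r\<^sup>2"
proof -
  have "real n * drift \<ge> drift" using n drift_nonneg mult_right_mono[of 1 "real n" drift] by simp
  then have drift_less: "drift < r\<^sup>2" using r_big zero_le_power2[of "norm (x0 - xs)"] by linarith
  moreover have "0 \<le> 2 * \<eta>\<^sup>2 * (S\<^sup>2 + L\<^sup>2 * r\<^sup>2)" by simp
  ultimately show \<eta>d: "\<eta> * real CARD('d) \<le> r\<^sup>2" unfolding drift_def by linarith
  have "r\<^sup>2 > 0" using \<eta>d \<eta>_pos card_ge_1 by (smt (verit) mult_pos_pos)
  then show r: "r > 0" using r_nonneg by (simp add: less_le)
  show "\<eta> * L \<le> 1"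
  proof (rule ccontr)
    assume "\<not> \<eta> * L \<le> 1"
    then have "(\<eta> * L)\<^sup>2 > 1" by (simp add: one_less_power)
    then have "2 * \<eta>\<^sup>2 * L\<^sup>2 * r\<^sup>2 \<ge> r\<^sup>2" using r by (simp add: power_mult_distrib)
    moreover have "drift \<ge> 2 * \<eta>\<^sup>2 * L\<^sup>2 * r\<^sup>2" unfolding drift_def using \<eta>_pos by (simp add: algebra_simps)
    ultimately show False using drift_less by linarith
  qed
qed

lemma emeasure_stopped_sum_ge_le:
  assumes C: "C \<ge> sqrt (2 * real CARD('d))"
    and lam: "lam > 0" "lam * (noise_const C)\<^sup>2 \<le> r\<^sup>2"
    and r: "r > 0" and \<eta>L: "\<eta> * L \<le> 1" and \<eta>d: "\<eta> * real CARD('d) \<le> r\<^sup>2"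
  shows "emeasure M {\<omega> \<in> space M. a \<le> stopped_sum k \<omega>}
       \<le> ennreal (exp (- lam * a + real k * (lam\<^sup>2 * (noise_const C)\<^sup>2 / 2)))"
proof -
  have [measurable]: "stopped_sum k \<in> borel_measurable M"
    by (rule measurable_stopped_sum[OF X_measurable])
  have "emeasure M {\<omega> \<in> space M. a \<le> stopped_sum k \<omega>}
      \<le> ennreal (exp (- lam * a)) * (\<integral>\<^sup>+\<omega>. ennreal (exp (lam * stopped_sum k \<omega>)) * indicator (space M) \<omega> \<partial>M)"
    using lam(1) by (intro Chernoff_ineq_nn_integral_ge) auto
  also have "(\<integral>\<^sup>+\<omega>. ennreal (exp (lam * stopped_sum k \<omega>)) * indicator (space M) \<omega> \<partial>M)
      = (\<integral>\<^sup>+\<omega>. ennreal (exp (lam * stopped_sum k \<omega>)) \<partial>M)"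
    by (intro nn_integral_cong) simp
  also have "ennreal (exp (- lam * a)) * \<dots> \<le> ennreal (exp (- lam * a)) * ennreal (exp (real k * (lam\<^sup>2 * (noise_const C)\<^sup>2 / 2)))"
    using nn_integral_exp_stopped_sum_le[OF C less_imp_le[OF lam(1)] lam(2) r \<eta>L \<eta>d]
    by (rule mult_left_mono) simp
  also have "\<dots> = ennreal (exp (- lam * a + real k * (lam\<^sup>2 * (noise_const C)\<^sup>2 / 2)))"
    by (simp add: ennreal_mult'[symmetric] exp_add[symmetric])
  finally show ?thesis .
qed

lemma noise_const_pos:
  assumes "C \<ge> sqrt (2 * real CARD('d))" and "r > 0"
  shows "noise_const C > 0"
proof -
  have "C > 0"
    using noise_level_nonneg[OF assms(1)] noise_level_sq[OF assms(1)] card_ge_1 by (cases "C = 0") auto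
  then have "0 < 2 * sqrt \<eta> * C * r" using \<eta>_pos assms(2) by simp
  then show ?thesis using noise_const_ge[of C] \<open>C > 0\<close> by linarith
qed

lemma emeasure_stopped_sum_ge_le_exp:
  assumes C: "C \<ge> sqrt (2 * real CARD('d))" and n: "n \<ge> 1" "k \<le> n"
    and \<delta>: "0 < \<delta>" "\<delta> \<le> r\<^sup>2"
    and r: "r > 0" and \<eta>L: "\<eta> * L \<le> 1" and \<eta>d: "\<eta> * real CARD('d) \<le> r\<^sup>2"
  shows "emeasure M {\<omega> \<in> space M. \<delta> \<le> stopped_sum k \<omega>}
       \<le> ennreal (exp (- (\<delta>\<^sup>2 / (2 * real n * (noise_const C)\<^sup>2))))"
proof -
  define c where "c = noise_const C"
  define lam where "lam = \<delta> / (real n * c\<^sup>2)"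
  have c: "c > 0" unfolding c_def by (rule noise_const_pos[OF C r])
  then have lam: "lam > 0" "lam * c\<^sup>2 = \<delta> / real n" using \<delta> n by (simp_all add: lam_def)
  have "\<delta> / real n \<le> \<delta>" using \<delta> n by (simp add: divide_le_eq)
  then have "lam * c\<^sup>2 \<le> r\<^sup>2" using lam(2) \<delta>(2) by simp
  from emeasure_stopped_sum_ge_le[OF C lam(1) this[unfolded c_def] r \<eta>L \<eta>d]
  have "emeasure M {\<omega> \<in> space M. \<delta> \<le> stopped_sum k \<omega>}
      \<le> ennreal (exp (- lam * \<delta> + real k * (lam\<^sup>2 * c\<^sup>2 / 2)))"
    unfolding c_def .
  also have "\<dots> \<le> ennreal (exp (- (\<delta>\<^sup>2 / (2 * real n * c\<^sup>2))))"
  proof (intro ennreal_leI exp_mono)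
    have "real k * (lam\<^sup>2 * c\<^sup>2 / 2) \<le> real n * (lam\<^sup>2 * c\<^sup>2 / 2)"
      using n by (intro mult_right_mono) auto
    moreover have "- lam * \<delta> + real n * (lam\<^sup>2 * c\<^sup>2 / 2) = - (\<delta>\<^sup>2 / (2 * real n * c\<^sup>2))"
      using c n by (simp add: lam_def power2_eq_square field_simps)
    ultimately show "- lam * \<delta> + real k * (lam\<^sup>2 * c\<^sup>2 / 2) \<le> - (\<delta>\<^sup>2 / (2 * real n * c\<^sup>2))"
      by linarith
  qed
  finally show ?thesis unfolding c_def .
qed

lemma prob_exit_ball_le:
  assumes C: "C \<ge> sqrt (2 * real CARD('d))"
    and r_big: "r\<^sup>2 > (norm (x0 - xs))\<^sup>2 + real n * drift"
  shows "measure M (space M - {\<omega> \<in> space M. \<forall>j\<in>{1..n}. norm (X j \<omega> - xs) \<le> r})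
       \<le> real n * exp (- ((r\<^sup>2 - (norm (x0 - xs))\<^sup>2 - real n * drift)\<^sup>2 / (2 * real n * (noise_const C)\<^sup>2)))"
proof (cases "n = 0")
  case False
  then have n: "n \<ge> 1" by simp
  define \<delta> where "\<delta> = r\<^sup>2 - (norm (x0 - xs))\<^sup>2 - real n * drift"
  define Q where "Q = exp (- (\<delta>\<^sup>2 / (2 * real n * (noise_const C)\<^sup>2)))"
  define A where "A k = {\<omega> \<in> space M. \<delta> \<le> stopped_sum k \<omega>}" for k
  have \<delta>: "0 < \<delta>" "\<delta> \<le> r\<^sup>2"
    using r_big mult_nonneg_nonneg[OF of_nat_0_le_iff drift_nonneg, of n]
      zero_le_power2[of "norm (x0 - xs)"]
    unfolding \<delta>_def by linarith+
  have A_measurable: "A k \<in> sets M" for k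
    unfolding A_def using measurable_stopped_sum[OF X_measurable] by measurable
  have A_le: "emeasure M (A k) \<le> ennreal Q" if "k \<in> {1..n}" for k
    unfolding A_def Q_def using that
    by (intro emeasure_stopped_sum_ge_le_exp[OF C n] \<delta> radius_pos[OF n r_big]
        step_size_le[OF n r_big] noise_variance_le[OF n r_big]) auto
  have "space M - {\<omega> \<in> space M. \<forall>j\<in>{1..n}. norm (X j \<omega> - xs) \<le> r} \<subseteq> (\<Union>k\<in>{1..n}. A k)"
  proof
    fix \<omega> assume "\<omega> \<in> space M - {\<omega> \<in> space M. \<forall>j\<in>{1..n}. norm (X j \<omega> - xs) \<le> r}"
    then have \<omega>: "\<omega> \<in> space M" and "\<not> (\<forall>j\<in>{1..n}. norm (X j \<omega> - xs) \<le> r)" by auto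
    from exit_imp_stopped_sum_gt[OF this] obtain k where "k \<in> {1..n}" "\<delta> < stopped_sum k \<omega>"
      unfolding \<delta>_def by blast
    then show "\<omega> \<in> (\<Union>k\<in>{1..n}. A k)" using \<omega> by (auto simp: A_def intro!: bexI[of _ k])
  qed
  then have "emeasure M (space M - {\<omega> \<in> space M. \<forall>j\<in>{1..n}. norm (X j \<omega> - xs) \<le> r})
      \<le> emeasure M (\<Union>k\<in>{1..n}. A k)"
    using A_measurable by (intro emeasure_mono) auto
  also have "\<dots> \<le> (\<Sum>k\<in>{1..n}. emeasure M (A k))"
    using A_measurable by (intro emeasure_subadditive_finite) auto
  also have "\<dots> \<le> (\<Sum>k\<in>{1..n}. ennreal Q)" using A_le by (rule sum_mono)
  also have "\<dots> = ennreal (real n * Q)"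
    by (simp add: ennreal_of_nat_eq_real_of_nat ennreal_mult'[symmetric] Q_def)
  finally show ?thesis
    unfolding measure_def Q_def \<delta>_def by (intro enn2real_leI) auto
qed simp

end

theorem lemma2:
  fixes M :: "'a measure"
    and F :: "real^'d \<Rightarrow> real" and gradF :: "real^'d \<Rightarrow> real^'d"
    and L S r \<eta> C\<^sub>\<xi> :: real and xs x0 :: "real^'d"
    and X \<zeta> \<xi> :: "nat \<Rightarrow> 'a \<Rightarrow> real^'d" and imax :: nat
  assumes M: "prob_space M"
    and convF: "convex_on UNIV F"
    and gradF: "\<And>x. (F has_derivative (\<lambda>h. gradF x \<bullet> h)) (at x)"
    and smooth: "\<And>x y. norm (gradF x - gradF y) \<le> L * norm (x - y)"
    and minim: "\<And>x. F xs \<le> F x"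
    and \<zeta>_meas: "\<And>i. \<zeta> i \<in> borel_measurable M"
    and \<zeta>_int: "\<And>i k. integrable M (\<lambda>\<omega>. \<zeta> i \<omega> $ k)"
    and \<zeta>_mean: "\<And>i k. AE \<omega> in M.
                  real_cond_exp M (gen_sigma M (X ` {..i})) (\<lambda>\<omega>. \<zeta> i \<omega> $ k) \<omega> = 0"
    and \<zeta>_bdd: "\<And>i \<omega>. \<omega> \<in> space M \<Longrightarrow> (\<forall>j\<le>i. norm (X j \<omega> - xs) \<le> r) \<Longrightarrow> norm (\<zeta> i \<omega>) \<le> S"
    and \<xi>_meas: "\<And>i. \<xi> i \<in> borel_measurable M"
    and \<xi>_gauss: "\<And>i. std_gaussian_vec M (\<xi> i)"
    and \<xi>_indep: "\<And>i. prob_space.indep_set M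
                     (sets (gen_sigma M (insert (\<zeta> i) (X ` {..i}))))
                     (sets (gen_sigma M {\<xi> i}))"
    and X0: "\<And>\<omega>. \<omega> \<in> space M \<Longrightarrow> X 0 \<omega> = x0"
    and x0r: "norm (x0 - xs) \<le> r"
    and Xrec: "\<And>i \<omega>. \<omega> \<in> space M \<Longrightarrow>
                 X (Suc i) \<omega> = X i \<omega> - \<eta> *\<^sub>R (gradF (X i \<omega>) + \<zeta> i \<omega>) + sqrt \<eta> *\<^sub>R \<xi> i \<omega>"
    and \<eta>_pos: "\<eta> > 0"
    and rbig: "r\<^sup>2 > (norm (x0 - xs))\<^sup>2
                 + real imax * (2 * \<eta>\<^sup>2 * (S\<^sup>2 + L\<^sup>2 * r\<^sup>2) + \<eta> * real CARD('d))"
    and C\<xi>: "C\<^sub>\<xi> \<ge> sqrt (2 * real CARD('d))"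
  shows "measure M (space M - {\<omega> \<in> space M. \<forall>j\<in>{1..imax}. norm (X j \<omega> - xs) \<le> r})
         \<le> real imax *
            (exp (- ((r\<^sup>2 - (norm (x0 - xs))\<^sup>2
                       - real imax * (2 * \<eta>\<^sup>2 * (S\<^sup>2 + L\<^sup>2 * r\<^sup>2) + \<eta> * real CARD('d)))\<^sup>2
                     / (2 * real imax * (2 * \<eta> * S * r
                          + 2 * sqrt \<eta> * C\<^sub>\<xi> * (r + \<eta> * S + \<eta> * L * r) + \<eta> * C\<^sub>\<xi>\<^sup>2)\<^sup>2)))
             + exp (- (C\<^sub>\<xi>\<^sup>2 - real CARD('d)) / 8))"
proof -
  interpret noisy_gradient_descent M F gradF L S r \<eta> xs x0 X \<zeta> \<xi>
    by (rule noisy_gradient_descent.intro) (fact M convF gradF smooth minim \<zeta>_meas \<zeta>_mean \<zeta>_bdd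
        \<xi>_meas \<xi>_gauss \<xi>_indep X0 x0r Xrec \<eta>_pos)+
  have "measure M (space M - {\<omega> \<in> space M. \<forall>j\<in>{1..imax}. norm (X j \<omega> - xs) \<le> r})
      \<le> real imax * exp (- ((r\<^sup>2 - (norm (x0 - xs))\<^sup>2 - real imax * drift)\<^sup>2
                             / (2 * real imax * (noise_const C\<^sub>\<xi>)\<^sup>2)))"
    by (rule prob_exit_ball_le[OF C\<xi> rbig[folded drift_def]])
  also have "\<dots> \<le> real imax * (exp (- ((r\<^sup>2 - (norm (x0 - xs))\<^sup>2 - real imax * drift)\<^sup>2
                             / (2 * real imax * (noise_const C\<^sub>\<xi>)\<^sup>2)))
                  + exp (- (C\<^sub>\<xi>\<^sup>2 - real CARD('d)) / 8))"
    by (intro mult_left_mono) auto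
  finally show ?thesis unfolding drift_def noise_const_def .
qed

end
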